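(* Let $n\ge 1$, let $\boldsymbol{L}\in\mathbb{R}^{n\times n}$ be Hurwitz, and for $m=1,\dots,n$ let $\boldsymbol{R}_m\in\mathbb{R}^{n\times n}$ be symmetric. Define $\boldsymbol{\Upsilon}:\mathbb{R}^n\to\mathbb{R}^n$ by $\Upsilon_m(\boldsymbol{a})=\boldsymbol{a}^T\boldsymbol{R}_m\boldsymbol{a}$, and assume $\boldsymbol{a}^T\boldsymbol{\Upsilon}(\boldsymbol{a})=0$ for all $\boldsymbol{a}\in\mathbb{R}^n$. Let $\boldsymbol{n}\in\mathbb{R}^n$ be a fixed vector with $\boldsymbol{n}^T\boldsymbol{\Upsilon}(\boldsymbol{a})=0$ for all $\boldsymbol{a}$, and set $\boldsymbol{M}_0:=\boldsymbol{I}$, $\boldsymbol{M}_i:=\boldsymbol{e}_i\boldsymbol{n}^T$ ($i=1,\dots,n$), $\boldsymbol{T}_j:=\boldsymbol{e}_j\boldsymbol{n}^T+\boldsymbol{n}\boldsymbol{e}_j^T$ ($j=1,\dots,n$), where $\boldsymbol{e}_k$ is the $k$-th standard unit vector. Consider the input-output system $$\dot{\boldsymbol{a}}=\boldsymbol{L}\boldsymbol{a}+\boldsymbol{\Upsilon}(\boldsymbol{a})+\boldsymbol{f}(t),\qquad \boldsymbol{y}=\boldsymbol{a},\qquad \boldsymbol{a}(0)=\boldsymbol{a}_0,$$ with input $\boldsymbol{f}:[0,\infty)\to\mathbb{R}^n$. Let $\delta>0$. Suppose there exist a symmetric matrix $\boldsymbol{P}\in\mathbb{R}^{n\times n}$,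 a scalar $\varepsilon>0$, scalars $s_1,\dots,s_n\ge 0$, and real scalars $\mu_0,\dots,\mu_n$, $\kappa_1,\dots,\kappa_n$ such that $\boldsymbol{P}-\varepsilon\boldsymbol{I}\succeq 0$ and $\boldsymbol{G}\preceq 0$, where $$\boldsymbol{G}:=\begin{bmatrix}\boldsymbol{L}^T\boldsymbol{P}+\boldsymbol{P}\boldsymbol{L}+\varepsilon\boldsymbol{I}+\sum_{m=1}^n s_m\delta^2\boldsymbol{R}_m\boldsymbol{R}_m & \boldsymbol{P}+\sum_{i=0}^n\mu_i\boldsymbol{M}_i\\ \boldsymbol{P}+\sum_{i=0}^n\mu_i\boldsymbol{M}_i^T & -\sum_{m=1}^n s_m\boldsymbol{e}_m\boldsymbol{e}_m^T+\sum_{j=1}^n\kappa_j\boldsymbol{T}_j\end{bmatrix}.$$ Let $\lambda_{\min}(\boldsymbol{P}),\lambda_{\max}(\boldsymbol{P})$ be the extreme eigenvalues of $\boldsymbol{P}$ and $\|2\boldsymbol{P}\|$ the spectral norm of $2\boldsymbol{P}$. Then for each $\boldsymbol{a}_0$ with $\|\boldsymbol{a}_0\|\le\delta\sqrt{\lambda_{\min}(\boldsymbol{P})/\lambda_{\max}(\boldsymbol{P})}$ the system is small-signal finite-gain $\mathcal{L}_p$ stable for each $p\in[1,\infty]$. In particular, for each $\tau\ge0$ and each $\boldsymbol{f}\in\mathcal{L}_{pe}$ with $$\sup_{0\le t\le\tau}\|\boldsymbol{f}(t)\|\le \frac{\lambda_{\min}(\boldsymbol{P})\,\varepsilon\,\delta}{\lambda_{\max}(\boldsymbol{P})\,\|2\boldsymbol{P}\|},$$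 the state satisfies $\|\boldsymbol{a}(t)\|\le\delta$ for all $t\in[0,\tau]$ and the output satisfies $\|\boldsymbol{y}_\tau\|_{\mathcal{L}_p}\le\gamma\|\boldsymbol{f}_\tau\|_{\mathcal{L}_p}+\beta$, where $$\gamma=\frac{\lambda_{\max}(\boldsymbol{P})\|2\boldsymbol{P}\|}{\lambda_{\min}(\boldsymbol{P})\,\varepsilon},\qquad \beta=\|\boldsymbol{a}_0\|\sqrt{\frac{\lambda_{\max}(\boldsymbol{P})}{\lambda_{\min}(\boldsymbol{P})}}\,\rho,\qquad \rho=\begin{cases}1,&p=\infty,\\ \left(\frac{2\lambda_{\max}(\boldsymbol{P})}{\varepsilon p}\right)^{1/p},&p\in[1,\infty).\end{cases}$$
   Context: $\|\cdot\|$ denotes the Euclidean norm on $\mathbb{R}^n$. For a signal $\boldsymbol{g}:[0,\infty)\to\mathbb{R}^n$ and $\tau\ge0$, the truncation is $\boldsymbol{g}_\tau(t)=\boldsymbol{g}(t)$ for $0\le t\le\tau$ and $\boldsymbol{g}_\tau(t)=\boldsymbol{0}$ for $t>\tau$. For $p\in[1,\infty)$, $\|\boldsymbol{g}\|_{\mathcal{L}_p}=(\int_0^\infty\|\boldsymbol{g}(t)\|^p\,dt)^{1/p}$, and $\|\boldsymbol{g}\|_{\mathcal{L}_\infty}=\sup_{t\ge0}\|\boldsymbol{g}(t)\|$. $\mathcal{L}_p$ is the set of piecewise continuous $\boldsymbol{g}:[0,\infty)\to\mathbb{R}^n$ with finite $\mathcal{L}_p$ norm, and the extended space is $\mathcal{L}_{pe}=\{\boldsymbol{g}:\boldsymbol{g}_\tau\in\mathcal{L}_p\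 \forall\tau\in[0,\infty)\}$. A matrix is Hurwitz if all its eigenvalues have negative real part. "Small-signal finite-gain $\mathcal{L}_p$ stable" means there exist constants $r>0$, $\gamma\ge0$, $\beta\ge0$ such that every input with $\sup_{0\le t\le\tau}\|\boldsymbol{f}(t)\|\le r$ yields $\|\boldsymbol{y}_\tau\|_{\mathcal{L}_p}\le\gamma\|\boldsymbol{f}_\tau\|_{\mathcal{L}_p}+\beta$; the explicit bounds are given in the claim. *)

theory Defs
  imports "HOL-Analysis.Analysis"
begin

text \<open>Matrices are real^'n^'n (rows indexed first). Euclidean norm is the norm on real^'n.\<close>

definition cmat :: "real^'n^'m \<Rightarrow> complex^'n^'m" where
  "cmat A = (\<chi> i j. complex_of_real (A $ i $ j))"

definition hurwitz :: "real^'n^'n \<Rightarrow> bool" where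
  "hurwitz A \<longleftrightarrow> (\<forall>(lam::complex) (v::complex^'n). v \<noteq> 0 \<and> cmat A *v v = (\<chi> i. lam * v $ i) \<longrightarrow> Re lam < 0)"

definition symmetric_mat :: "real^'n^'n \<Rightarrow> bool" where
  "symmetric_mat A \<longleftrightarrow> transpose A = A"

definition psd :: "real^'n^'n \<Rightarrow> bool" where
  "psd A \<longleftrightarrow> (\<forall>x. 0 \<le> x \<bullet> (A *v x))"

definition nsd :: "real^'n^'n \<Rightarrow> bool" where
  "nsd A \<longleftrightarrow> (\<forall>x. x \<bullet> (A *v x) \<le> 0)"

definition outer :: "real^'n \<Rightarrow> real^'m \<Rightarrow> real^'m^'n" where
  "outer u v = (\<chi> i j. u $ i * v $ j)"

definition block :: "real^'n^'n \<Rightarrow> real^'n^'n \<Rightarrow> real^'n^'n \<Rightarrow> real^'n^'n \<Rightarrow> real^('n+'n)^('n+'n)" where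
  "block A B C D = (\<chi> i j. (case i of
       Inl i' \<Rightarrow> (case j of Inl j' \<Rightarrow> A $ i' $ j' | Inr j' \<Rightarrow> B $ i' $ j')
     | Inr i' \<Rightarrow> (case j of Inl j' \<Rightarrow> C $ i' $ j' | Inr j' \<Rightarrow> D $ i' $ j')))"

text \<open>Real eigenvalues; for symmetric matrices these are all eigenvalues.\<close>
definition real_eigenvalues :: "real^'n^'n \<Rightarrow> real set" where
  "real_eigenvalues A = {lam. \<exists>v. v \<noteq> 0 \<and> A *v v = lam *\<^sub>R v}"

definition lambda_min :: "real^'n^'n \<Rightarrow> real" where
  "lambda_min A = Min (real_eigenvalues A)"

definition lambda_max :: "real^'n^'n \<Rightarrow> real" where
  "lambda_max A = Max (real_eigenvalues A)"

text \<open>Spectral norm = operator norm induced by the Euclidean norm.\<close>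
definition spec_norm :: "real^'n^'n \<Rightarrow> real" where
  "spec_norm A = onorm (\<lambda>x. A *v x)"

definition Upsilon :: "('n \<Rightarrow> real^'n^'n) \<Rightarrow> real^'n \<Rightarrow> real^'n" where
  "Upsilon R a = (\<chi> m. a \<bullet> (R m *v a))"

definition trunc :: "real \<Rightarrow> (real \<Rightarrow> real^'n) \<Rightarrow> real \<Rightarrow> real^'n" where
  "trunc \<tau> g t = (if 0 \<le> t \<and> t \<le> \<tau> then g t else 0)"

definition Lp_norm :: "real \<Rightarrow> (real \<Rightarrow> real^'n) \<Rightarrow> real" where
  "Lp_norm p g = (integral {0..} (\<lambda>t. norm (g t) powr p)) powr (1 / p)"

definition Linf_norm :: "(real \<Rightarrow> real^'n) \<Rightarrow> real" where
  "Linf_norm g = (SUP t\<in>{0..}. norm (g t))"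

definition piecewise_continuous :: "(real \<Rightarrow> real^'n) \<Rightarrow> bool" where
  "piecewise_continuous f \<longleftrightarrow> (\<forall>T\<ge>0. \<exists>D. finite D \<and>
      (\<forall>t\<in>{0..T} - D. continuous (at t within {0..}) f) \<and>
      (\<forall>t\<in>D. (t > 0 \<longrightarrow> (\<exists>l. (f \<longlongrightarrow> l) (at_left t))) \<and> (\<exists>l. (f \<longlongrightarrow> l) (at_right t))))"

text \<open>a solves a' = L a + Upsilon(a) + f(t), a(0) = a0 on [0,tau] (integral / Caratheodory sense).\<close>
definition is_solution :: "real^'n^'n \<Rightarrow> ('n \<Rightarrow> real^'n^'n) \<Rightarrow> (real \<Rightarrow> real^'n) \<Rightarrow> real^'n \<Rightarrow> real \<Rightarrow> (real \<Rightarrow> real^'n) \<Rightarrow> bool" where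
  "is_solution L R f a0 \<tau> a \<longleftrightarrow> a 0 = a0 \<and> continuous_on {0..\<tau>} a \<and>
     (\<forall>t\<in>{0..\<tau>}. ((\<lambda>s. L *v a s + Upsilon R (a s) + f s) has_integral (a t - a0)) {0..t})"

end

theory Submission
  imports Defs
begin

text \<open>Let \<open>V(a) = a\<^sup>T P a\<close>. Testing the LMI \<open>G \<preceq> 0\<close> with the vector \<open>(a, \<Upsilon>(a))\<close>, on which the
  \<open>\<mu>\<close>- and \<open>\<kappa>\<close>-terms vanish, and using \<open>\<Upsilon>\<^sub>m(a)\<^sup>2 \<le> |a|\<^sup>2 |R\<^sub>m a|\<^sup>2\<close> gives the dissipation inequality
  \<open>V' \<le> -\<epsilon>|a|\<^sup>2 + (|a|\<^sup>2 - \<delta>\<^sup>2) \<Sigma>\<^sub>m s\<^sub>m |R\<^sub>m a|\<^sup>2 + \<parallel>2P\<parallel> |a| |f|\<close>. While \<open>|f|\<close> stays below the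
  threshold, a barrier argument shows that the ellipsoid \<open>V \<le> \<lambda>\<^sub>m\<^sub>i\<^sub>n \<delta>\<^sup>2\<close>, which lies in the ball
  \<open>|a| \<le> \<delta>\<close>, is never left. Inside the ball the S-procedure term is nonpositive, so
  \<open>V' \<le> -2c V + 2k \<surd>V |f|\<close> with \<open>c = \<epsilon> / (2 \<lambda>\<^sub>m\<^sub>a\<^sub>x)\<close> and \<open>k = \<parallel>2P\<parallel> / (2 \<surd>\<lambda>\<^sub>m\<^sub>i\<^sub>n)\<close>, i.e.
  \<open>(\<surd>V)' \<le> -c \<surd>V + k |f|\<close>. The \<open>L\<^sub>\<infinity>\<close> bound follows from another invariant sublevel set, the
  \<open>L\<^sub>p\<close> bound from integrating the derivative of \<open>(V + \<eta>)\<^bsup>p/2\<^esup>\<close>, splitting off the input with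
  Young's inequality, and letting \<open>\<eta> \<rightarrow> 0\<close>.\<close>

section \<open>Matrix algebra\<close>

lemma matrix_vector_mult_sum: "sum F S *v x = (\<Sum>i\<in>S. F i *v x)"
  for F :: "'k \<Rightarrow> real^'n^'m"
  by (induction S rule: infinite_finite_induct) (auto simp: matrix_vector_mult_add_rdistrib)

lemma matrix_vector_mult_uminus: "(- A) *v x = - (A *v x)" for A :: "real^'n^'m"
  by (simp add: matrix_vector_mult_def vec_eq_iff sum_negf)

lemma outer_mult_vector: "outer u v *v y = (v \<bullet> y) *\<^sub>R u"
  by (simp add: outer_def matrix_vector_mult_def inner_vec_def vec_eq_iff sum_distrib_left mult_ac)

lemma transpose_outer: "transpose (outer u v) = outer v u"
  by (simp add: outer_def transpose_def vec_eq_iff)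

lemma inner_transpose_mult: "x \<bullet> (transpose A *v y) = (A *v x) \<bullet> y" for A :: "real^'n^'m"
  by (metis dot_lmul_matrix inner_commute transpose_matrix_vector)

lemma symmetric_mat_inner: "symmetric_mat P \<Longrightarrow> x \<bullet> (P *v y) = y \<bullet> (P *v x)"
  unfolding symmetric_mat_def by (metis inner_transpose_mult inner_commute)

lemma symmetric_mat_uminus: "symmetric_mat (- P) \<longleftrightarrow> symmetric_mat P"
  by (auto simp: symmetric_mat_def transpose_def vec_eq_iff)

definition vstack :: "real^'n \<Rightarrow> real^'n \<Rightarrow> real^('n+'n)" where
  "vstack x y = (\<chi> k. case k of Inl i \<Rightarrow> x $ i | Inr i \<Rightarrow> y $ i)"

lemma sum_UNIV_Plus: "sum g (UNIV :: ('a+'b) set) = (\<Sum>i\<in>UNIV. g (Inl i)) + (\<Sum>i\<in>UNIV. g (Inr i))"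
  for g :: "'a::finite + 'b::finite \<Rightarrow> 'c::comm_monoid_add"
proof -
  have "sum g (UNIV :: ('a+'b) set) = sum g (UNIV <+> UNIV)" by simp
  also have "\<dots> = sum (g \<circ> Inl) UNIV + sum (g \<circ> Inr) UNIV" by (rule sum.Plus) auto
  finally show ?thesis by (simp add: o_def)
qed

lemma inner_vstack: "vstack x y \<bullet> vstack u v = x \<bullet> u + y \<bullet> v"
  by (simp add: inner_vec_def sum_UNIV_Plus vstack_def)

lemma block_mult_vstack: "block A B C D *v vstack x y = vstack (A *v x + B *v y) (C *v x + D *v y)"
  unfolding vec_eq_iff matrix_vector_mult_def
  by (simp add: sum_UNIV_Plus vstack_def block_def split: sum.split)

lemma block_quadratic_form:
  "vstack x y \<bullet> (block A B C D *v vstack x y) = x \<bullet> (A *v x) + x \<bullet> (B *v y) + y \<bullet> (C *v x) + y \<bullet> (D *v y)"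
  by (simp add: block_mult_vstack inner_vstack inner_add_right)

lemma quadratic_nonneg_imp_linear_coeff_zero:
  fixes b c :: real
  assumes "\<And>t. 0 \<le> 2 * t * b + t\<^sup>2 * c"
  shows "b = 0"
proof (rule ccontr)
  assume "b \<noteq> 0"
  define t where "t = - b / (\<bar>c\<bar> + 1)"
  have "2 * t * b = - 2 * b\<^sup>2 / (\<bar>c\<bar> + 1)" by (simp add: t_def power2_eq_square)
  moreover have "t\<^sup>2 * c \<le> b\<^sup>2 / (\<bar>c\<bar> + 1)"
  proof -
    have "t\<^sup>2 * c \<le> t\<^sup>2 * \<bar>c\<bar>" by (simp add: mult_left_mono)
    also have "\<dots> = b\<^sup>2 * \<bar>c\<bar> / (\<bar>c\<bar> + 1)\<^sup>2" by (simp add: t_def power_divide)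
    also have "\<dots> \<le> b\<^sup>2 * (\<bar>c\<bar> + 1) / (\<bar>c\<bar> + 1)\<^sup>2"
      by (intro divide_right_mono mult_left_mono) auto
    also have "\<dots> = b\<^sup>2 / (\<bar>c\<bar> + 1)" by (simp add: power2_eq_square)
    finally show ?thesis .
  qed
  moreover have "b\<^sup>2 / (\<bar>c\<bar> + 1) > 0" using \<open>b \<noteq> 0\<close> by simp
  ultimately have "2 * t * b + t\<^sup>2 * c < 0" by linarith
  with assms[of t] show False by linarith
qed

section \<open>Extreme eigenvalues of symmetric matrices\<close>

lemma continuous_on_quadratic_form: "continuous_on S (\<lambda>x. x \<bullet> (P *v x))" for P :: "real^'n^'n"
  by (intro continuous_intros linear_continuous_on matrix_vector_mul_bounded_linear)

lemma symmetric_mat_psd_kernel: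
  assumes sym: "symmetric_mat Q" and psd: "\<And>x. 0 \<le> x \<bullet> (Q *v x)" and u: "u \<bullet> (Q *v u) = 0"
  shows "Q *v u = 0"
proof -
  have "v \<bullet> (Q *v u) = 0" for v
  proof (rule quadratic_nonneg_imp_linear_coeff_zero)
    fix t :: real
    have "(u + t *\<^sub>R v) \<bullet> (Q *v (u + t *\<^sub>R v)) = 2 * t * (v \<bullet> (Q *v u)) + t\<^sup>2 * (v \<bullet> (Q *v v))"
      using u symmetric_mat_inner[OF sym, of u v]
      by (simp add: matrix_vector_right_distrib matrix_vector_mult_scaleR inner_add_left inner_add_right
          power2_eq_square algebra_simps)
    then show "0 \<le> 2 * t * (v \<bullet> (Q *v u)) + t\<^sup>2 * (v \<bullet> (Q *v v))"
      by (metis psd)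
  qed
  from this[of "Q *v u"] show ?thesis by simp
qed

lemma symmetric_mat_min_eigenpair:
  fixes P :: "real^'n^'n"
  assumes sym: "symmetric_mat P"
  obtains m u where "u \<noteq> 0" "P *v u = m *\<^sub>R u" "\<And>x. m * (x \<bullet> x) \<le> x \<bullet> (P *v x)"
proof -
  have "axis undefined 1 \<in> sphere (0::real^'n) 1" by simp
  then obtain u where u: "u \<in> sphere 0 1"
    and umin: "\<And>y. y \<in> sphere 0 1 \<Longrightarrow> u \<bullet> (P *v u) \<le> y \<bullet> (P *v y)"
    using continuous_attains_inf[OF compact_sphere _ continuous_on_quadratic_form] by blast
  define m where "m = u \<bullet> (P *v u)"
  have lower: "m * (x \<bullet> x) \<le> x \<bullet> (P *v x)" for x
  proof (cases "x = 0")
    case False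
    define z where "z = (1 / norm x) *\<^sub>R x"
    have "z \<in> sphere 0 1" using False by (simp add: z_def)
    then have "m \<le> z \<bullet> (P *v z)" using umin m_def by blast
    also have "\<dots> = (x \<bullet> (P *v x)) / (norm x)\<^sup>2"
      by (simp add: z_def matrix_vector_mult_scaleR power2_eq_square)
    finally have "m * (norm x)\<^sup>2 \<le> x \<bullet> (P *v x)" using False by (simp add: field_simps)
    then show ?thesis by (simp add: power2_norm_eq_inner)
  qed simp
  define Q where "Q = P - m *\<^sub>R mat 1"
  have "Q *v u = 0"
  proof (rule symmetric_mat_psd_kernel)
    show "symmetric_mat Q"
      using sym by (simp add: Q_def symmetric_mat_def transpose_def mat_def vec_eq_iff)
    show "0 \<le> x \<bullet> (Q *v x)" for x
      using lower[of x] by (simp add: Q_def matrix_vector_mult_diff_rdistrib scaleR_matrix_vector_assoc[symmetric] inner_diff_right)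
    have "u \<bullet> u = 1" using u by (simp add: dot_square_norm)
    then show "u \<bullet> (Q *v u) = 0"
      by (simp add: Q_def m_def matrix_vector_mult_diff_rdistrib scaleR_matrix_vector_assoc[symmetric] inner_diff_right)
  qed
  then have "P *v u = m *\<^sub>R u"
    by (simp add: Q_def matrix_vector_mult_diff_rdistrib scaleR_matrix_vector_assoc[symmetric] inner_diff_right)
  moreover have "u \<noteq> 0" using u by auto
  ultimately show thesis using lower that by blast
qed

lemma real_eigenvalue_ge_quadratic_lower_bound:
  assumes "\<And>x. m * (x \<bullet> x) \<le> x \<bullet> (P *v x)" and "l \<in> real_eigenvalues P"
  shows "m \<le> l"
proof -
  obtain w where "w \<noteq> 0" "P *v w = l *\<^sub>R w" using assms(2) by (auto simp: real_eigenvalues_def)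
  then have "m * (w \<bullet> w) \<le> l * (w \<bullet> w)" "0 < w \<bullet> w" using assms(1)[of w] by auto
  then show ?thesis by simp
qed

text \<open>Eigenvectors of distinct eigenvalues are orthogonal, hence independent.\<close>

lemma finite_real_eigenvalues:
  assumes sym: "symmetric_mat P"
  shows "finite (real_eigenvalues P)"
proof -
  define E where "E = real_eigenvalues P"
  define v where "v = (\<lambda>l. SOME w. w \<noteq> 0 \<and> P *v w = l *\<^sub>R w)"
  have v: "v l \<noteq> 0" "P *v v l = l *\<^sub>R v l" if "l \<in> E" for l
    using someI_ex[of "\<lambda>w. w \<noteq> 0 \<and> P *v w = l *\<^sub>R w"] that
    by (auto simp: E_def real_eigenvalues_def v_def)
  have orth: "v l1 \<bullet> v l2 = 0" if "l1 \<in> E" "l2 \<in> E" "l1 \<noteq> l2" for l1 l2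
  proof -
    have "l1 * (v l1 \<bullet> v l2) = l2 * (v l1 \<bullet> v l2)"
      using symmetric_mat_inner[OF sym, of "v l2" "v l1"] v that by (simp add: inner_commute)
    then show ?thesis using that by simp
  qed
  have inj: "inj_on v E"
  proof
    fix l1 l2 assume "l1 \<in> E" "l2 \<in> E" "v l1 = v l2"
    then show "l1 = l2" using orth[of l1 l2] v by force
  qed
  have "pairwise orthogonal (v ` E)"
    using orth by (auto simp: pairwise_def orthogonal_def)
  moreover have "0 \<notin> v ` E" using v by auto
  ultimately have "independent (v ` E)" by (rule pairwise_orthogonal_independent)
  then have "finite (v ` E)" by (rule independent_bound[THEN conjunct1])
  then show ?thesis using finite_imageD inj by (auto simp: E_def)
qed

lemma lambda_min_symmetric:
  assumes sym: "symmetric_mat P"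
  shows "lambda_min P \<in> real_eigenvalues P" and "lambda_min P * (x \<bullet> x) \<le> x \<bullet> (P *v x)"
proof -
  obtain m u where "u \<noteq> 0" "P *v u = m *\<^sub>R u" and lower: "\<And>x. m * (x \<bullet> x) \<le> x \<bullet> (P *v x)"
    using symmetric_mat_min_eigenpair[OF sym] by blast
  then have m: "m \<in> real_eigenvalues P" by (auto simp: real_eigenvalues_def)
  have "lambda_min P = m"
    unfolding lambda_min_def using finite_real_eigenvalues[OF sym] m
    by (intro Min_eqI real_eigenvalue_ge_quadratic_lower_bound[OF lower])
  then show "lambda_min P \<in> real_eigenvalues P" "lambda_min P * (x \<bullet> x) \<le> x \<bullet> (P *v x)"
    using m lower by auto
qed

lemma quadratic_form_le_lambda_max:
  assumes sym: "symmetric_mat P"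
  shows "x \<bullet> (P *v x) \<le> lambda_max P * (x \<bullet> x)"
proof -
  obtain m u where "u \<noteq> 0" "(- P) *v u = m *\<^sub>R u" and lower: "\<And>x. m * (x \<bullet> x) \<le> x \<bullet> ((- P) *v x)"
    using symmetric_mat_min_eigenpair sym symmetric_mat_uminus by metis
  then have "P *v u = (- m) *\<^sub>R u"
    by (metis matrix_vector_mult_uminus minus_minus scaleR_minus_left)
  then have "- m \<in> real_eigenvalues P"
    using \<open>u \<noteq> 0\<close> by (auto simp: real_eigenvalues_def)
  moreover have upper: "x \<bullet> (P *v x) \<le> - m * (x \<bullet> x)" for x
    using lower[of x] by (simp add: matrix_vector_mult_uminus)
  moreover have "l \<le> - m" if "l \<in> real_eigenvalues P" for l
    using real_eigenvalue_ge_quadratic_lower_bound[of m "- P" "- l"] lower that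
    by (force simp: real_eigenvalues_def matrix_vector_mult_uminus)
  ultimately have "lambda_max P = - m"
    unfolding lambda_max_def using finite_real_eigenvalues[OF sym] by (intro Max_eqI) auto
  then show ?thesis using upper by simp
qed

section \<open>Consequences of the LMI\<close>

lemma spec_norm_nonneg: "0 \<le> spec_norm A"
  unfolding spec_norm_def by (rule onorm_pos_le[OF matrix_vector_mul_bounded_linear])

lemma inner_mult_le_spec_norm: "x \<bullet> (A *v y) \<le> spec_norm A * norm x * norm y"
proof -
  have "x \<bullet> (A *v y) \<le> norm x * norm (A *v y)" by (rule norm_cauchy_schwarz)
  also have "\<dots> \<le> norm x * (spec_norm A * norm y)"
    unfolding spec_norm_def by (intro mult_left_mono onorm[OF matrix_vector_mul_bounded_linear]) simp
  finally show ?thesis by (simp add: mult_ac)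
qed

lemma Upsilon_component_sq_le: "(Upsilon R x $ m)\<^sup>2 \<le> (x \<bullet> x) * ((R m *v x) \<bullet> (R m *v x))"
  unfolding Upsilon_def by (simp add: Cauchy_Schwarz_ineq)

lemma continuous_on_Upsilon: "continuous_on S (Upsilon R)"
  unfolding Upsilon_def by (intro continuous_on_vec_lambda continuous_on_quadratic_form)

locale lmi_certificate =
  fixes L P :: "real^'n^'n" and R :: "'n \<Rightarrow> real^'n^'n" and nv :: "real^'n"
    and \<delta> \<epsilon> \<mu>0 :: real and s \<mu> \<kappa> :: "'n \<Rightarrow> real"
  assumes Rsym: "\<And>m. symmetric_mat (R m)"
    and energy: "\<And>x. x \<bullet> Upsilon R x = 0"
    and nvec: "\<And>x. nv \<bullet> Upsilon R x = 0"
    and delta_pos: "\<delta> > 0"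
    and Psym: "symmetric_mat P"
    and eps_pos: "\<epsilon> > 0"
    and s_nonneg: "\<And>m. s m \<ge> 0"
    and P_lmi: "psd (P - \<epsilon> *\<^sub>R mat 1)"
    and G_lmi: "nsd (block
        (transpose L ** P + P ** L + \<epsilon> *\<^sub>R mat 1 + (\<Sum>m\<in>UNIV. (s m * \<delta>\<^sup>2) *\<^sub>R (R m ** R m)))
        (P + \<mu>0 *\<^sub>R mat 1 + (\<Sum>i\<in>UNIV. \<mu> i *\<^sub>R outer (axis i 1) nv))
        (P + \<mu>0 *\<^sub>R transpose (mat 1) + (\<Sum>i\<in>UNIV. \<mu> i *\<^sub>R transpose (outer (axis i 1) nv)))
        (- (\<Sum>m\<in>UNIV. s m *\<^sub>R outer (axis m 1) (axis m 1))
           + (\<Sum>j\<in>UNIV. \<kappa> j *\<^sub>R (outer (axis j 1) nv + outer nv (axis j 1)))))"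
begin

abbreviation lmin :: real where "lmin \<equiv> lambda_min P"
abbreviation lmax :: real where "lmax \<equiv> lambda_max P"
abbreviation \<sigma> :: real where "\<sigma> \<equiv> spec_norm (2 *\<^sub>R P)"
abbreviation decay :: real where "decay \<equiv> \<epsilon> / (2 * lmax)"
abbreviation gain :: real where "gain \<equiv> \<sigma> / (2 * sqrt lmin)"

text \<open>The S-procedure multiplier of the ball constraint \<open>x \<bullet> x \<le> \<delta>\<^sup>2\<close>.\<close>

definition ball_weight :: "real^'n \<Rightarrow> real" where
  "ball_weight x = (\<Sum>m\<in>UNIV. s m * ((R m *v x) \<bullet> (R m *v x)))"

lemma ball_weight_nonneg: "0 \<le> ball_weight x"
  unfolding ball_weight_def using s_nonneg by (intro sum_nonneg mult_nonneg_nonneg) auto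

lemma continuous_on_ball_weight: "continuous_on S ball_weight"
  unfolding ball_weight_def
  by (intro continuous_intros linear_continuous_on matrix_vector_mul_bounded_linear)

text \<open>The multipliers \<open>\<mu>\<close> and \<open>\<kappa>\<close> drop out because \<open>x\<close> and \<open>nv\<close> are orthogonal to \<open>Upsilon R x\<close>.\<close>

lemma G_lmi_at_state:
  "2 * (x \<bullet> (P *v (L *v x))) + \<epsilon> * (x \<bullet> x) + \<delta>\<^sup>2 * ball_weight x
     + 2 * (x \<bullet> (P *v Upsilon R x)) - (\<Sum>m\<in>UNIV. s m * (Upsilon R x $ m)\<^sup>2) \<le> 0"
proof -
  define y where "y = Upsilon R x"
  have orth: "x \<bullet> y = 0" "y \<bullet> x = 0" "nv \<bullet> y = 0" "y \<bullet> nv = 0"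
    using energy nvec by (auto simp: y_def inner_commute)
  have top_left: "x \<bullet> ((transpose L ** P + P ** L + \<epsilon> *\<^sub>R mat 1
      + (\<Sum>m\<in>UNIV. (s m * \<delta>\<^sup>2) *\<^sub>R (R m ** R m))) *v x)
     = 2 * (x \<bullet> (P *v (L *v x))) + \<epsilon> * (x \<bullet> x) + \<delta>\<^sup>2 * ball_weight x"
  proof -
    have "x \<bullet> (transpose L *v (P *v x)) = x \<bullet> (P *v (L *v x))"
      by (metis inner_transpose_mult Psym symmetric_mat_inner inner_commute)
    moreover have "x \<bullet> (R m *v (R m *v x)) = (R m *v x) \<bullet> (R m *v x)" for m
      by (metis Rsym symmetric_mat_inner)
    ultimately show ?thesis
      by (simp add: matrix_vector_mult_add_rdistrib matrix_vector_mult_sum inner_add_right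
          inner_sum_right ball_weight_def sum_distrib_left mult_ac scaleR_matrix_vector_assoc[symmetric]
          flip: matrix_vector_mul_assoc del: transpose_matrix_vector)
  qed
  have top_right: "x \<bullet> ((P + \<mu>0 *\<^sub>R mat 1 + (\<Sum>i\<in>UNIV. \<mu> i *\<^sub>R outer (axis i 1) nv)) *v y) = x \<bullet> (P *v y)"
    by (simp add: matrix_vector_mult_add_rdistrib matrix_vector_mult_sum inner_add_right
        inner_sum_right outer_mult_vector orth scaleR_matrix_vector_assoc[symmetric])
  have bottom_left: "y \<bullet> ((P + \<mu>0 *\<^sub>R transpose (mat 1)
      + (\<Sum>i\<in>UNIV. \<mu> i *\<^sub>R transpose (outer (axis i 1) nv))) *v x) = x \<bullet> (P *v y)"
    by (simp add: matrix_vector_mult_add_rdistrib matrix_vector_mult_sum inner_add_right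
        inner_sum_right outer_mult_vector transpose_outer orth symmetric_mat_inner[OF Psym, of y x]
        scaleR_matrix_vector_assoc[symmetric])
  have bottom_right: "y \<bullet> ((- (\<Sum>m\<in>UNIV. s m *\<^sub>R outer (axis m 1) (axis m 1))
      + (\<Sum>j\<in>UNIV. \<kappa> j *\<^sub>R (outer (axis j 1) nv + outer nv (axis j 1)))) *v y)
     = - (\<Sum>m\<in>UNIV. s m * (y $ m)\<^sup>2)"
    unfolding matrix_vector_mult_add_rdistrib matrix_vector_mult_uminus matrix_vector_mult_sum
      scaleR_matrix_vector_assoc[symmetric] outer_mult_vector
    by (simp add: inner_add_right inner_diff_right inner_sum_right orth inner_axis inner_axis' power2_eq_square mult_ac)
  show ?thesis
    using G_lmi[unfolded nsd_def, THEN spec[of _ "vstack x y"], unfolded block_quadratic_form top_left top_right bottom_left bottom_right]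
    by (simp add: y_def)
qed

lemma dissipation_inequality:
  "2 * (x \<bullet> (P *v (L *v x + Upsilon R x + v)))
     \<le> - \<epsilon> * (x \<bullet> x) + (x \<bullet> x - \<delta>\<^sup>2) * ball_weight x + \<sigma> * norm x * norm v"
proof -
  have "(\<Sum>m\<in>UNIV. s m * (Upsilon R x $ m)\<^sup>2) \<le> (\<Sum>m\<in>UNIV. s m * ((x \<bullet> x) * ((R m *v x) \<bullet> (R m *v x))))"
    by (intro sum_mono mult_left_mono Upsilon_component_sq_le s_nonneg)
  also have "\<dots> = (x \<bullet> x) * ball_weight x"
    by (simp add: ball_weight_def sum_distrib_left mult_ac)
  finally have "(\<Sum>m\<in>UNIV. s m * (Upsilon R x $ m)\<^sup>2) \<le> (x \<bullet> x) * ball_weight x" .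
  moreover have "2 * (x \<bullet> (P *v v)) \<le> \<sigma> * norm x * norm v"
    using inner_mult_le_spec_norm[of x "2 *\<^sub>R P" v] by (simp add: scaleR_matrix_vector_assoc[symmetric])
  ultimately show ?thesis
    using G_lmi_at_state[of x]
    by (simp add: matrix_vector_right_distrib inner_add_right algebra_simps)
qed

lemma lambda_min_max_bounds:
  "\<epsilon> \<le> lmin" "0 < lmin" "lmin \<le> lmax"
proof -
  obtain u where "u \<noteq> 0" "P *v u = lmin *\<^sub>R u"
    using lambda_min_symmetric(1)[OF Psym] by (auto simp: real_eigenvalues_def)
  moreover have "0 \<le> u \<bullet> ((P - \<epsilon> *\<^sub>R mat 1) *v u)"
    using P_lmi by (simp add: psd_def)
  ultimately have "0 \<le> (lmin - \<epsilon>) * (u \<bullet> u)"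
    by (simp add: matrix_vector_mult_diff_rdistrib scaleR_matrix_vector_assoc[symmetric]
        inner_diff_right algebra_simps)
  moreover have "0 < u \<bullet> u" using \<open>u \<noteq> 0\<close> by simp
  ultimately show "\<epsilon> \<le> lmin"
    by (simp add: zero_le_mult_iff)
  with eps_pos show "0 < lmin" by linarith
  have "lmin * (u \<bullet> u) \<le> lmax * (u \<bullet> u)"
    using lambda_min_symmetric(2)[OF Psym, of u] quadratic_form_le_lambda_max[OF Psym, of u]
    by linarith
  with \<open>u \<noteq> 0\<close> show "lmin \<le> lmax" by simp
qed

end

section \<open>Scalar comparison lemmas\<close>

lemma diff_le_integral_of_derivative_le:
  fixes h h' k :: "real \<Rightarrow> real"
  assumes xy: "x \<le> y" and S: "finite S" and hc: "continuous_on {x..y} h"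
    and hd: "\<And>t. t \<in> {x<..<y} - S \<Longrightarrow> (h has_real_derivative h' t) (at t)"
    and hk: "\<And>t. t \<in> {x<..<y} - S \<Longrightarrow> h' t \<le> k t"
    and ki: "k integrable_on {x..y}"
  shows "h y - h x \<le> integral {x..y} k"
proof -
  have h': "(h' has_integral (h y - h x)) {x..y}"
    using fundamental_theorem_of_calculus_interior_strong[OF S xy _ hc] hd
    by (simp add: has_real_derivative_iff_has_vector_derivative)
  have "((\<lambda>t. if t \<in> S \<union> {x, y} then k t else h' t) has_integral (h y - h x)) {x..y}"
    by (rule has_integral_spike_finite[OF _ _ h', of "S \<union> {x, y}"]) (use S in auto)
  then show ?thesis
    by (rule has_integral_le[OF _ integrable_integral[OF ki]]) (use hk in auto)
qed

lemma nonpos_derivative_imp_decreasing: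
  fixes h h' :: "real \<Rightarrow> real"
  assumes "x \<le> y" "finite S" "continuous_on {x..y} h"
    and "\<And>t. t \<in> {x<..<y} - S \<Longrightarrow> (h has_real_derivative h' t) (at t)"
    and "\<And>t. t \<in> {x<..<y} - S \<Longrightarrow> h' t \<le> 0"
  shows "h y \<le> h x"
proof -
  have "h y - h x \<le> integral {x..y} (\<lambda>_. 0)"
    by (rule diff_le_integral_of_derivative_le[OF assms(1-4)]) (use assms(5) in auto)
  then show ?thesis by simp
qed

text \<open>A barrier argument: after the last time \<open>s\<^sub>0\<close> before \<open>t\<close> at which \<open>V \<le> b\<close>, the function
  \<open>exp (- \<kappa> s) * (V s - b)\<close> is positive and decreasing, which is impossible since it vanishes at \<open>s\<^sub>0\<close>.\<close>

lemma sublevel_set_invariant: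
  fixes V V' :: "real \<Rightarrow> real"
  assumes D: "finite D" and Vc: "continuous_on {0..\<tau>} V"
    and Vd: "\<And>s. s \<in> {0<..<\<tau>} - D \<Longrightarrow> (V has_real_derivative V' s) (at s)"
    and above: "\<And>s. s \<in> {0<..<\<tau>} - D \<Longrightarrow> b < V s \<Longrightarrow> V' s \<le> \<kappa> * (V s - b)"
    and V0: "V 0 \<le> b" and t: "t \<in> {0..\<tau>}"
  shows "V t \<le> b"
proof (rule ccontr)
  assume "\<not> V t \<le> b"
  define A where "A = {0..t} \<inter> V -` {..b}"
  have "closed A" unfolding A_def
    by (rule continuous_closed_preimage[OF continuous_on_subset[OF Vc]]) (use t in auto)
  moreover have "0 \<in> A" "bdd_above A" using V0 t by (auto simp: A_def)
  ultimately have "Sup A \<in> A" by (intro closed_contains_Sup) auto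
  define s0 where "s0 = Sup A"
  have s0: "0 \<le> s0" "s0 \<le> t" "V s0 \<le> b"
    using \<open>Sup A \<in> A\<close> by (auto simp: A_def s0_def)
  have beyond: "b < V s" if "s \<in> {s0<..t}" for s
    using cSup_upper[of s A] \<open>bdd_above A\<close> that s0 by (force simp: A_def s0_def)
  define Z where "Z = (\<lambda>s. exp (- \<kappa> * s) * (V s - b))"
  have "Z t \<le> Z s0"
  proof (rule nonpos_derivative_imp_decreasing[OF s0(2) D])
    show "continuous_on {s0..t} Z" unfolding Z_def
      by (intro continuous_intros continuous_on_subset[OF Vc]) (use s0 t in auto)
    fix s assume s: "s \<in> {s0<..<t} - D"
    then have s': "s \<in> {0<..<\<tau>} - D" using s0 t by auto
    show "(Z has_real_derivative exp (- \<kappa> * s) * (V' s - \<kappa> * (V s - b))) (at s)"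
      unfolding Z_def by (auto intro!: derivative_eq_intros Vd[OF s'] simp: algebra_simps)
    show "exp (- \<kappa> * s) * (V' s - \<kappa> * (V s - b)) \<le> 0"
      using above[OF s' beyond] s by (simp add: mult_nonneg_nonpos)
  qed
  moreover have "Z s0 \<le> 0" using s0(3) by (simp add: Z_def mult_nonneg_nonpos)
  moreover have "Z t > 0" using \<open>\<not> V t \<le> b\<close> by (simp add: Z_def)
  ultimately show False by simp
qed

lemma young_powr_product:
  fixes y \<phi> z p :: real
  assumes y: "y > 0" and \<phi>: "\<phi> \<ge> 0" and z: "z > 0" and p: "p \<ge> 1"
  shows "y powr ((p-1)/2) * \<phi> \<le> ((p-1)/p) * z * y powr (p/2) + (1/p) * z powr (1-p) * \<phi> powr p"
proof (cases "p = 1 \<or> \<phi> = 0")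
  case True
  then show ?thesis using \<phi> p z y by auto
next
  case False
  then have p1: "p > 1" and \<phi>_pos: "\<phi> > 0" using p \<phi> by auto
  define A where "A = z * y powr (p/2)"
  define B where "B = z powr (1-p) * \<phi> powr p"
  have young: "A powr ((p-1)/p) * B powr (1/p) \<le> ((p-1)/p) * A + (1/p) * B"
    using Youngs_inequality_0[of "(p-1)/p" "1/p" A B] z y \<phi>_pos p1 by (simp add: A_def B_def field_simps)
  moreover have "A powr ((p-1)/p) = z powr ((p-1)/p) * y powr ((p-1)/2)"
    using p1 by (simp add: A_def powr_mult powr_powr)
  moreover have "B powr (1/p) = z powr ((1-p)/p) * \<phi>"
    using \<phi>_pos p1 by (simp add: B_def powr_mult powr_powr)
  moreover have "z powr ((p-1)/p) * z powr ((1-p)/p) = 1"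
    using p1 z by (simp add: powr_add[symmetric] add_divide_distrib[symmetric])
  ultimately have "A powr ((p-1)/p) * B powr (1/p) = y powr ((p-1)/2) * \<phi>"
    by (simp add: algebra_simps)
  with young show ?thesis by (simp add: A_def B_def algebra_simps)
qed

lemma regularization_term_le:
  fixes \<eta> y p M :: real
  assumes \<eta>: "\<eta> > 0" and y: "\<eta> \<le> y" "y \<le> M" and p: "p \<ge> 1"
  shows "\<eta> * y powr (p/2 - 1) \<le> \<eta> powr (p/2) + \<eta> * M powr (p/2 - 1)"
proof (cases "p \<le> 2")
  case True
  have "\<eta> * y powr (p/2 - 1) \<le> \<eta> * \<eta> powr (p/2 - 1)"
    using True \<eta> y by (intro mult_left_mono powr_mono2') auto
  also have "\<dots> = \<eta> powr (p/2)"
    using \<eta> by (simp add: powr_mult_base)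
  finally have "\<eta> * y powr (p/2 - 1) \<le> \<eta> powr (p/2)" .
  moreover have "0 \<le> \<eta> * M powr (p/2 - 1)" using \<eta> by simp
  ultimately show ?thesis by linarith
next
  case False
  have "\<eta> * y powr (p/2 - 1) \<le> \<eta> * M powr (p/2 - 1)"
    using False \<eta> y by (intro mult_left_mono powr_mono2) auto
  then show ?thesis by (simp add: add_increasing)
qed

text \<open>The regularisation \<open>\<eta>\<close> keeps the base of \<open>(V + \<eta>)\<^bsup>p/2\<^esup>\<close> away from \<open>0\<close>, where \<open>powr\<close> is not
  differentiable; Young's inequality with weight \<open>z\<close> splits off the input term.\<close>

lemma regularized_power_derivative_le:
  fixes V V' \<phi> \<eta> z p c k M :: real
  assumes V: "0 \<le> V" "V \<le> M" and \<eta>: "0 < \<eta>" "\<eta> \<le> 1" and \<phi>: "0 \<le> \<phi>" and z: "0 < z"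
    and p: "1 \<le> p" and c: "0 < c" and k: "0 \<le> k"
    and V': "V' \<le> -2*c*V + 2*k * sqrt V * \<phi>"
  shows "p/2 * (V + \<eta>) powr (p/2 - 1) * V'
    \<le> (k*(p-1)*z - c*p) * (V + \<eta>) powr (p/2) + c*p*(\<eta> powr (p/2) + \<eta> * (M+1) powr (p/2 - 1))
       + k * z powr (1-p) * \<phi> powr p"
proof -
  define y where "y = V + \<eta>"
  have y: "\<eta> \<le> y" "0 < y" "y \<le> M + 1" using V \<eta> by (auto simp: y_def)
  have yy: "y powr (p/2 - 1) * y = y powr (p/2)"
    using powr_mult_base[of y "p/2 - 1"] y by (simp add: mult.commute)
  have ysq: "y powr (p/2 - 1) * sqrt V \<le> y powr ((p-1)/2)"
  proof -
    have "y powr (p/2 - 1) * sqrt V \<le> y powr (p/2 - 1) * y powr (1/2)"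
      using y V \<eta> by (intro mult_left_mono) (auto simp: powr_half_sqrt y_def)
    also have "\<dots> = y powr ((p-1)/2)" by (simp add: powr_add[symmetric] diff_divide_distrib)
    finally show ?thesis .
  qed
  have "p/2 * y powr (p/2 - 1) * V' \<le> p/2 * y powr (p/2 - 1) * (-2*c*V + 2*k * sqrt V * \<phi>)"
    using V' p by (intro mult_left_mono) auto
  also have "\<dots> = -c*p*(y powr (p/2 - 1) * y) + c*p*(\<eta> * y powr (p/2 - 1))
      + k*p*((y powr (p/2 - 1) * sqrt V) * \<phi>)"
    by (simp add: y_def algebra_simps)
  also have "\<dots> \<le> -c*p*y powr (p/2) + c*p*(\<eta> powr (p/2) + \<eta> * (M+1) powr (p/2 - 1))
      + k*p*(y powr ((p-1)/2) * \<phi>)"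
    unfolding yy using regularization_term_le[OF \<eta>(1) y(1) y(3) p] ysq c k p \<phi>
    by (intro add_mono mult_left_mono mult_right_mono) auto
  also have "\<dots> \<le> -c*p*y powr (p/2) + c*p*(\<eta> powr (p/2) + \<eta> * (M+1) powr (p/2 - 1))
      + k*p*(((p-1)/p) * z * y powr (p/2) + (1/p) * z powr (1-p) * \<phi> powr p)"
    using young_powr_product[OF y(2) \<phi> z p] k p by (intro add_left_mono mult_left_mono) auto
  also have "\<dots> = (k*(p-1)*z - c*p) * y powr (p/2) + c*p*(\<eta> powr (p/2) + \<eta> * (M+1) powr (p/2 - 1))
       + k * z powr (1-p) * \<phi> powr p"
    using p by (simp add: field_simps)
  finally show ?thesis by (simp add: y_def)
qed

text \<open>Take \<open>z = (F + \<eta>) / X\<close> and let \<open>\<eta> \<rightarrow> 0\<close>.\<close>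

lemma young_family_optimum:
  fixes c p k X F C :: real
  assumes c: "c > 0" and p: "p \<ge> 1" and k: "k \<ge> 0" and X: "X > 0" and F: "F \<ge> 0"
    and H: "\<And>z. z > 0 \<Longrightarrow> c*p * X powr p \<le> C + k*(p-1)*z * X powr p + k * z powr (1-p) * F powr p"
  shows "c * X powr p \<le> C/p + k * F * X powr (p-1)"
proof -
  define Y where "Y = X powr (p-1)"
  have p0: "p > 0" using p by simp
  have Y: "0 < Y" "X powr p = X * Y"
    using X powr_mult_base[of X "p-1"] by (simp_all add: Y_def)
  have "c * X powr p - C/p - k * F * Y \<le> 0"
  proof (rule field_le_epsilon[where y = 0, simplified])
    fix e :: real assume e: "0 < e"
    define \<eta> where "\<eta> = e / (k * Y + 1)"
    have kY: "0 \<le> k * Y" using k Y by simp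
    have \<eta>: "0 < \<eta>" "k * Y * \<eta> \<le> e"
      using e kY by (auto simp: \<eta>_def field_simps)
    define z where "z = (F + \<eta>) / X"
    have z: "0 < z" using X F \<eta> by (simp add: z_def)
    have "X powr (1-p) = 1 / Y" using X by (simp add: Y_def powr_minus_divide[symmetric])
    then have zF: "z powr (1-p) * F powr p = ((F + \<eta>) powr (1-p) * F powr p) * Y"
      by (simp add: z_def powr_divide)
    have "(F + \<eta>) powr (1-p) * F powr p \<le> (F + \<eta>) powr (1-p) * (F + \<eta>) powr p"
      using F \<eta> p0 by (intro mult_left_mono powr_mono2) auto
    also have "\<dots> = F + \<eta>" using F \<eta> by (simp add: powr_add[symmetric])
    finally have "k * (z powr (1-p) * F powr p) \<le> k * ((F + \<eta>) * Y)"
      unfolding zF using k Y by (intro mult_left_mono mult_right_mono) auto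
    moreover have "k*(p-1)*z * X powr p = k*(p-1)*(F + \<eta>)*Y"
      using X Y by (simp add: z_def)
    moreover have "c*p * X powr p \<le> C + k*(p-1)*z * X powr p + k * (z powr (1-p) * F powr p)"
      using H[OF z] by (simp add: mult.assoc)
    ultimately have "p * (c * X powr p) \<le> p * (C/p + k*(F + \<eta>)*Y)"
      using p0 by (simp add: algebra_simps)
    then have "c * X powr p \<le> C/p + k*(F + \<eta>)*Y"
      using p0 by (simp add: mult_le_cancel_left_pos)
    then show "c * X powr p - C/p - k * F * Y \<le> e"
      using \<eta> by (simp add: algebra_simps)
  qed
  then show ?thesis by (simp add: Y_def)
qed

lemma root_bound_of_young_family:
  fixes c p k I J C :: real
  assumes c: "c > 0" and p: "p \<ge> 1" and k: "k \<ge> 0" and I: "I \<ge> 0" and J: "J \<ge> 0" and C: "C \<ge> 0"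
    and H: "\<And>z. z > 0 \<Longrightarrow> c*p*I \<le> C + k*(p-1)*z*I + k * z powr (1-p) * J"
  shows "I powr (1/p) \<le> (k/c) * J powr (1/p) + (C/(c*p)) powr (1/p)"
proof -
  define X where "X = I powr (1/p)"
  define F where "F = J powr (1/p)"
  define B where "B = (C/(c*p)) powr (1/p)"
  have p0: "p > 0" using p by simp
  have XF: "I = X powr p" "J = F powr p" "C = c*p * B powr p" "0 \<le> X" "0 \<le> F" "0 \<le> B"
    using I J C c p0 by (simp_all add: X_def F_def B_def powr_powr)
  have kF: "0 \<le> k/c * F" using XF c k by simp
  have "X \<le> B + k/c * F"
  proof (cases "X \<le> B")
    case False
    then have X: "0 < X" "B < X" using XF by auto
    have "c * X powr p \<le> c*p * B powr p / p + k * F * X powr (p-1)"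
      by (rule young_family_optimum[OF c p k X(1) XF(5)]) (use H in \<open>simp add: XF(1-3)\<close>)
    then have "c * (X * X powr (p-1)) \<le> c * B powr p + k * F * X powr (p-1)"
      using X p0 powr_mult_base[of X "p-1"] by simp
    also have "B powr p \<le> B * X powr (p-1)"
    proof (cases "B = 0")
      case False
      then have "B powr p = B * B powr (p-1)" using XF powr_mult_base[of B "p-1"] by simp
      also have "\<dots> \<le> B * X powr (p-1)" using X XF p by (auto intro!: mult_left_mono powr_mono2)
      finally show ?thesis .
    qed (use p0 in simp)
    then have "c * B powr p + k * F * X powr (p-1) \<le> c * (B * X powr (p-1)) + k * F * X powr (p-1)"
      using c by simp
    finally have "(c * X) * X powr (p-1) \<le> (c * B + k * F) * X powr (p-1)"
      by (simp add: algebra_simps)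
    then have "c * X \<le> c * B + k * F" using X by simp
    then show ?thesis using c by (simp add: field_simps)
  qed (use kF in linarith)
  then show ?thesis unfolding X_def F_def B_def by linarith
qed

lemma regularized_Lp_bound_tendsto:
  fixes v p c \<tau> M :: real
  assumes v: "v \<ge> 0" and p: "p \<ge> 1" and c: "c > 0" and M: "M \<ge> 0" and tau: "\<tau> \<ge> 0"
  shows "((\<lambda>\<eta>. (((v + \<eta>) powr (p/2) + c*p*(\<eta> powr (p/2) + \<eta>*M)*\<tau>)/(c*p)) powr (1/p))
          \<longlongrightarrow> ((v powr (p/2))/(c*p)) powr (1/p)) (at_right 0)"
proof -
  have pos: "eventually (\<lambda>\<eta>. 0 < \<eta>) (at_right (0::real))" by (rule eventually_at_right_less)
  have lim0: "((\<lambda>\<eta>. \<eta>) \<longlongrightarrow> 0) (at_right (0::real))" "((\<lambda>\<eta>. v + \<eta>) \<longlongrightarrow> v + 0) (at_right (0::real))"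
    by (intro tendsto_intros)+
  have l1: "((\<lambda>\<eta>. (v + \<eta>) powr (p/2)) \<longlongrightarrow> (v + 0) powr (p/2)) (at_right 0)"
    by (rule tendsto_powr'[OF lim0(2) tendsto_const]) (use p v pos in \<open>auto elim: eventually_mono\<close>)
  have l2: "((\<lambda>\<eta>::real. \<eta> powr (p/2)) \<longlongrightarrow> 0 powr (p/2)) (at_right 0)"
    by (rule tendsto_powr'[OF lim0(1) tendsto_const]) (use p pos in \<open>auto elim: eventually_mono\<close>)
  have "((\<lambda>\<eta>. ((v + \<eta>) powr (p/2) + c*p*(\<eta> powr (p/2) + \<eta>*M)*\<tau>)/(c*p))
      \<longlongrightarrow> ((v + 0) powr (p/2) + c*p*(0 powr (p/2) + 0*M)*\<tau>)/(c*p)) (at_right 0)"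
    by (intro tendsto_intros l1 l2) (use c p in auto)
  then have lim: "((\<lambda>\<eta>. ((v + \<eta>) powr (p/2) + c*p*(\<eta> powr (p/2) + \<eta>*M)*\<tau>)/(c*p))
      \<longlongrightarrow> (v powr (p/2))/(c*p)) (at_right 0)"
    using p by simp
  have "eventually (\<lambda>\<eta>. 0 \<le> ((v + \<eta>) powr (p/2) + c*p*(\<eta> powr (p/2) + \<eta>*M)*\<tau>)/(c*p))
      (at_right 0)"
    using pos by eventually_elim (use c p M tau in auto)
  then show ?thesis
    using p by (intro tendsto_powr'[OF lim tendsto_const]) auto
qed

text \<open>The differential inequality below is \<open>(\<surd>V)' \<le> -c \<surd>V + k \<phi>\<close>, stated for \<open>V\<close> itself because \<open>\<surd>\<close>
  is not differentiable at \<open>0\<close>.\<close>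

locale sqrt_comparison =
  fixes \<tau> :: real and D :: "real set" and V V' \<phi> :: "real \<Rightarrow> real" and c k :: real
  assumes tau_nonneg: "0 \<le> \<tau>" and finite_D: "finite D"
    and continuous_V: "continuous_on {0..\<tau>} V"
    and V_nonneg: "\<And>t. t \<in> {0..\<tau>} \<Longrightarrow> 0 \<le> V t"
    and V_deriv: "\<And>t. t \<in> {0<..<\<tau>} - D \<Longrightarrow> (V has_real_derivative V' t) (at t)"
    and V'_le: "\<And>t. t \<in> {0<..<\<tau>} - D \<Longrightarrow> V' t \<le> -2*c*V t + 2*k * sqrt (V t) * \<phi> t"
    and c_pos: "0 < c" and k_nonneg: "0 \<le> k"
    and phi_nonneg: "\<And>t. t \<in> {0..\<tau>} \<Longrightarrow> 0 \<le> \<phi> t"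
begin

text \<open>Above the level \<open>(\<surd>V(0) + k \<Phi> / c)\<^sup>2\<close> the right-hand side of the differential inequality is
  nonpositive.\<close>

lemma sqrt_le_sup_bound:
  assumes phi: "\<And>t. t \<in> {0..\<tau>} \<Longrightarrow> \<phi> t \<le> \<Phi>" and t: "t \<in> {0..\<tau>}"
  shows "sqrt (V t) \<le> sqrt (V 0) + (k/c) * \<Phi>"
proof -
  define B where "B = sqrt (V 0) + (k/c) * \<Phi>"
  have V0: "0 \<le> V 0" using V_nonneg t by auto
  have "0 \<le> \<Phi>" using phi_nonneg[OF t] phi[OF t] by linarith
  then have "0 \<le> k/c * \<Phi>" using c_pos k_nonneg by simp
  then have B: "0 \<le> B" "k/c * \<Phi> \<le> B" using V0 by (auto simp: B_def)
  have "V t \<le> B\<^sup>2"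
  proof (rule sublevel_set_invariant[OF finite_D continuous_V V_deriv, of _ 0])
    fix s assume s: "s \<in> {0<..<\<tau>} - D" and "B\<^sup>2 < V s"
    then have "B < sqrt (V s)" using B by (metis real_less_rsqrt)
    have "k * \<phi> s \<le> k * \<Phi>" using phi[of s] s k_nonneg by (simp add: mult_left_mono)
    also have "\<dots> \<le> c * B" using B(2) c_pos by (simp add: field_simps)
    also have "\<dots> \<le> c * sqrt (V s)" using \<open>B < sqrt (V s)\<close> c_pos by simp
    finally have "k * \<phi> s \<le> c * sqrt (V s)" .
    then have "-2*c*V s + 2*k * sqrt (V s) * \<phi> s \<le> 0"
      using V_nonneg[of s] s mult_left_mono[of "k * \<phi> s" "c * sqrt (V s)" "sqrt (V s)"]
      by (auto simp: algebra_simps power2_eq_square[symmetric])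
    then show "V' s \<le> 0 * (V s - B\<^sup>2)" using V'_le[OF s] by simp
  next
    have "sqrt (V 0) \<le> B" using \<open>0 \<le> k/c * \<Phi>\<close> by (simp add: B_def)
    then show "V 0 \<le> B\<^sup>2" by (rule sqrt_le_D)
  qed (use t in auto)
  then show ?thesis using B(1) unfolding B_def by (rule real_le_lsqrt[rotated])
qed

context
  fixes M p :: real
  assumes V_le_M: "\<And>t. t \<in> {0..\<tau>} \<Longrightarrow> V t \<le> M"
    and phi_powr_integrable: "(\<lambda>t. \<phi> t powr p) integrable_on {0..\<tau>}"
    and p_ge_1: "p \<ge> 1"
begin

lemma regularized_energy_family:
  assumes \<eta>: "0 < \<eta>" "\<eta> \<le> 1" and z: "0 < z"
  shows "c*p * integral {0..\<tau>} (\<lambda>t. (V t + \<eta>) powr (p/2))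
    \<le> (V 0 + \<eta>) powr (p/2) + c*p*(\<eta> powr (p/2) + \<eta> * (M+1) powr (p/2 - 1))*\<tau>
       + k*(p-1)*z * integral {0..\<tau>} (\<lambda>t. (V t + \<eta>) powr (p/2))
       + k * z powr (1-p) * integral {0..\<tau>} (\<lambda>t. \<phi> t powr p)"
proof -
  define E where "E = \<eta> powr (p/2) + \<eta> * (M+1) powr (p/2 - 1)"
  define h where "h = (\<lambda>s. (V s + \<eta>) powr (p/2))"
  define IY where "IY = integral {0..\<tau>} h"
  define I\<phi> where "I\<phi> = integral {0..\<tau>} (\<lambda>t. \<phi> t powr p)"
  have hc: "continuous_on {0..\<tau>} h"
    unfolding h_def by (rule continuous_on_powr'[OF continuous_on_add[OF continuous_V continuous_on_const]
        continuous_on_const]) (use V_nonneg \<eta> in force)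
  have dh: "(h has_real_derivative p/2 * (V s + \<eta>) powr (p/2 - 1) * V' s) (at s)"
    if s: "s \<in> {0<..<\<tau>} - D" for s
  proof -
    have "V s + \<eta> > 0" using V_nonneg[of s] s \<eta> by auto
    moreover have "((\<lambda>s. V s + \<eta>) has_real_derivative V' s) (at s)"
      using V_deriv[OF s] by (auto intro!: derivative_eq_intros)
    ultimately show ?thesis
      unfolding h_def by (rule DERIV_chain2[OF has_real_derivative_powr])
  qed
  define g where "g = (\<lambda>s. (k*(p-1)*z - c*p) * h s + c*p*E + k * z powr (1-p) * \<phi> s powr p)"
  have gint: "(g has_integral ((k*(p-1)*z - c*p) * IY + c*p*E*\<tau> + k * z powr (1-p) * I\<phi>)) {0..\<tau>}"
    unfolding g_def IY_def I\<phi>_def using has_integral_const_real[of "c*p*E" 0 \<tau>] tau_nonneg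
    by (intro has_integral_add has_integral_mult_right integrable_integral
        integrable_continuous_interval[OF hc] phi_powr_integrable) (auto simp: mult.commute)
  have "h \<tau> - h 0 \<le> integral {0..\<tau>} g"
  proof (rule diff_le_integral_of_derivative_le[OF tau_nonneg finite_D hc dh])
    show "g integrable_on {0..\<tau>}" using gint by blast
    fix s assume s: "s \<in> {0<..<\<tau>} - D"
    then have s0: "s \<in> {0..\<tau>}" by auto
    show "p/2 * (V s + \<eta>) powr (p/2 - 1) * V' s \<le> g s"
      unfolding g_def h_def E_def
      by (rule regularized_power_derivative_le[OF V_nonneg[OF s0] V_le_M[OF s0] \<eta> phi_nonneg[OF s0]
            z p_ge_1 c_pos k_nonneg V'_le[OF s]])
  qed
  also have "integral {0..\<tau>} g = (k*(p-1)*z - c*p) * IY + c*p*E*\<tau> + k * z powr (1-p) * I\<phi>"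
    using gint by (rule integral_unique)
  finally have "h \<tau> - h 0 \<le> (k*(p-1)*z - c*p) * IY + c*p*E*\<tau> + k * z powr (1-p) * I\<phi>" .
  moreover have "0 \<le> h \<tau>" by (simp add: h_def)
  ultimately have "c*p*IY \<le> h 0 + c*p*E*\<tau> + k*(p-1)*z*IY + k * z powr (1-p) * I\<phi>"
    by (simp add: algebra_simps)
  then show ?thesis unfolding IY_def I\<phi>_def E_def h_def .
qed

lemma regularized_Lp_bound:
  assumes \<eta>: "0 < \<eta>" "\<eta> \<le> 1"
  shows "(integral {0..\<tau>} (\<lambda>t. V t powr (p/2))) powr (1/p)
    \<le> (k/c) * (integral {0..\<tau>} (\<lambda>t. \<phi> t powr p)) powr (1/p)
       + (((V 0 + \<eta>) powr (p/2) + c*p*(\<eta> powr (p/2) + \<eta> * (M+1) powr (p/2 - 1))*\<tau>)/(c*p)) powr (1/p)"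
proof -
  have p0: "p > 0" using p_ge_1 by simp
  have Yint: "(\<lambda>t. (V t + \<eta>) powr (p/2)) integrable_on {0..\<tau>}"
    by (rule integrable_continuous_interval[OF continuous_on_powr'[OF
          continuous_on_add[OF continuous_V continuous_on_const] continuous_on_const]])
      (use V_nonneg \<eta> in force)
  have Vint: "(\<lambda>t. V t powr (p/2)) integrable_on {0..\<tau>}"
    by (rule integrable_continuous_interval[OF continuous_on_powr'[OF continuous_V continuous_on_const]])
      (use V_nonneg p0 in force)
  have "(integral {0..\<tau>} (\<lambda>t. V t powr (p/2))) powr (1/p)
      \<le> (integral {0..\<tau>} (\<lambda>t. (V t + \<eta>) powr (p/2))) powr (1/p)"
    using p0 \<eta> V_nonneg integral_nonneg[OF Vint]
    by (intro powr_mono2 integral_le[OF Vint Yint]) auto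
  also have "\<dots> \<le> (k/c) * (integral {0..\<tau>} (\<lambda>t. \<phi> t powr p)) powr (1/p)
       + (((V 0 + \<eta>) powr (p/2) + c*p*(\<eta> powr (p/2) + \<eta> * (M+1) powr (p/2 - 1))*\<tau>)/(c*p)) powr (1/p)"
    using c_pos p_ge_1 k_nonneg \<eta> tau_nonneg V_nonneg phi_nonneg
    by (intro root_bound_of_young_family regularized_energy_family integral_nonneg Yint phi_powr_integrable
        add_nonneg_nonneg mult_nonneg_nonneg) auto
  finally show ?thesis .
qed

lemma sqrt_Lp_bound:
  "(integral {0..\<tau>} (\<lambda>t. V t powr (p/2))) powr (1/p)
    \<le> (k/c) * (integral {0..\<tau>} (\<lambda>t. \<phi> t powr p)) powr (1/p) + (1/(c*p)) powr (1/p) * sqrt (V 0)"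
proof -
  define K where "K = (k/c) * (integral {0..\<tau>} (\<lambda>t. \<phi> t powr p)) powr (1/p)"
  define R where "R = (\<lambda>\<eta>. (((V 0 + \<eta>) powr (p/2)
    + c*p*(\<eta> powr (p/2) + \<eta> * ((M+1) powr (p/2 - 1)))*\<tau>)/(c*p)) powr (1/p))"
  have V0: "0 \<le> V 0" using V_nonneg tau_nonneg by simp
  have "((\<lambda>\<eta>. K + R \<eta>) \<longlongrightarrow> K + ((V 0 powr (p/2))/(c*p)) powr (1/p)) (at_right 0)"
    unfolding R_def
    by (intro tendsto_add tendsto_const regularized_Lp_bound_tendsto V0 p_ge_1 c_pos tau_nonneg) simp
  moreover have "eventually (\<lambda>\<eta>. (integral {0..\<tau>} (\<lambda>t. V t powr (p/2))) powr (1/p) \<le> K + R \<eta>) (at_right 0)"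
    unfolding eventually_at_right_field K_def R_def
    by (intro exI[of _ 1] conjI allI impI regularized_Lp_bound) auto
  ultimately have "(integral {0..\<tau>} (\<lambda>t. V t powr (p/2))) powr (1/p) \<le> K + ((V 0 powr (p/2))/(c*p)) powr (1/p)"
    by (intro tendsto_le[OF _ _ tendsto_const]) simp_all
  also have "((V 0 powr (p/2))/(c*p)) powr (1/p) = (1/(c*p)) powr (1/p) * sqrt (V 0)"
    using p_ge_1 V0 by (simp add: powr_divide powr_powr powr_half_sqrt)
  finally show ?thesis by (simp add: K_def)
qed

end

end

section \<open>Trajectories of the system\<close>

lemma integral_solution_has_vector_derivative:
  fixes g a :: "real \<Rightarrow> real^'n"
  assumes sol: "\<And>t. t \<in> {0..\<tau>} \<Longrightarrow> (g has_integral (a t - a0)) {0..t}"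
    and D: "finite D" and t: "t \<in> {0<..<\<tau>} - D"
    and gc: "continuous (at t within {0..\<tau>}) g"
  shows "(a has_vector_derivative g t) (at t)"
proof -
  have "g integrable_on {0..\<tau>}" using sol[of \<tau>] t by auto
  then have "((\<lambda>u. integral {0..u} g) has_vector_derivative g t) (at t within ({0..\<tau>} - D))"
    by (rule integral_has_vector_derivative_continuous_at[OF _ _ D])
      (use t continuous_within_subset[OF gc, of "{0..\<tau>} - D"] in auto)
  moreover have "at t within ({0..\<tau>} - D) = at t"
    using t D by (intro at_within_open_subset[of _ "{0<..<\<tau>} - D"] open_Diff finite_imp_closed) auto
  ultimately have "((\<lambda>u. integral {0..u} g + a0) has_vector_derivative g t) (at t)"
    by (simp add: has_vector_derivative_add_const)
  then show ?thesis
  proof (rule has_vector_derivative_transform_within_open[OF _ open_greaterThanLessThan])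
    show "t \<in> {0<..<\<tau>}" using t by auto
    fix u assume "u \<in> {0<..<\<tau>}"
    then show "integral {0..u} g + a0 = a u" using sol[of u] by (simp add: integral_unique)
  qed
qed

lemma quadratic_form_has_real_derivative:
  fixes P :: "real^'n^'n" and a :: "real \<Rightarrow> real^'n"
  assumes sym: "symmetric_mat P" and da: "(a has_vector_derivative v) (at t)"
  shows "((\<lambda>s. a s \<bullet> (P *v a s)) has_real_derivative 2 * (a t \<bullet> (P *v v))) (at t)"
proof -
  have da': "(a has_derivative (\<lambda>h. h *\<^sub>R v)) (at t)" using da by (simp add: has_vector_derivative_def)
  have "((\<lambda>s. a s \<bullet> (P *v a s)) has_derivative (\<lambda>h. a t \<bullet> (P *v (h *\<^sub>R v)) + (h *\<^sub>R v) \<bullet> (P *v a t))) (at t)"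
    by (rule has_derivative_inner[OF da' bounded_linear.has_derivative[OF matrix_vector_mul_bounded_linear da']])
  moreover have "(\<lambda>h. a t \<bullet> (P *v (h *\<^sub>R v)) + (h *\<^sub>R v) \<bullet> (P *v a t)) = (\<lambda>h. h * (2 * (a t \<bullet> (P *v v))))"
    using symmetric_mat_inner[OF sym, of v "a t"] by (auto simp: matrix_vector_mult_scaleR algebra_simps)
  ultimately show ?thesis by (simp add: has_field_derivative_def mult_commute_abs)
qed

lemma Lp_norm_trunc:
  fixes g :: "real \<Rightarrow> real^'n"
  assumes "(\<lambda>t. norm (g t) powr p) integrable_on {0..\<tau>}"
  shows "Lp_norm p (trunc \<tau> g) = (integral {0..\<tau>} (\<lambda>t. norm (g t) powr p)) powr (1/p)"
proof -
  have "(\<lambda>t. norm (trunc \<tau> g t) powr p) = (\<lambda>t. if t \<in> {0..\<tau>} then norm (g t) powr p else 0)"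
    by (auto simp: trunc_def)
  moreover have "((\<lambda>t. if t \<in> {0..\<tau>} then norm (g t) powr p else 0)
      has_integral integral {0..\<tau>} (\<lambda>t. norm (g t) powr p)) {0..}"
    by (subst has_integral_restrict) (use assms in auto)
  ultimately show ?thesis unfolding Lp_norm_def by (simp add: integral_unique)
qed

lemma integrable_powr_norm_if_bounded:
  fixes g :: "real \<Rightarrow> real^'n"
  assumes gi: "g integrable_on {0..\<tau>}" and b: "\<And>t. t \<in> {0..\<tau>} \<Longrightarrow> norm (g t) \<le> r" and p: "p > 0"
  shows "(\<lambda>t. norm (g t) powr p) integrable_on {0..\<tau>}"
proof (rule measurable_bounded_by_integrable_imp_integrable_real)
  show "(\<lambda>t. norm (g t) powr p) \<in> borel_measurable (lebesgue_on {0..\<tau>})"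
    using integrable_imp_measurable[OF gi] by measurable
  show "(\<lambda>_. r powr p) integrable_on {0..\<tau>}" by (rule integrable_const_ivl)
  show "\<bar>norm (g t) powr p\<bar> \<le> r powr p" if "t \<in> {0..\<tau>}" for t
    using b[OF that] p by (simp add: powr_mono2)
qed simp

lemma norm_le_Linf_norm_trunc:
  assumes "\<And>s. s \<in> {0..\<tau>} \<Longrightarrow> norm (g s) \<le> r" and "t \<in> {0..\<tau>}"
  shows "norm (g t) \<le> Linf_norm (trunc \<tau> g)"
proof -
  have "bdd_above ((\<lambda>t. norm (trunc \<tau> g t)) ` {0..})"
    using assms(1) by (intro bdd_aboveI[of _ "max r 0"]) (force simp: trunc_def le_max_iff_disj)
  then have "norm (trunc \<tau> g t) \<le> Linf_norm (trunc \<tau> g)"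
    unfolding Linf_norm_def by (rule cSUP_upper[rotated]) (use assms(2) in auto)
  then show ?thesis using assms(2) by (simp add: trunc_def)
qed

lemma Linf_norm_trunc_le:
  assumes "\<And>t. t \<in> {0..\<tau>} \<Longrightarrow> norm (g t) \<le> B" and "0 \<le> B"
  shows "Linf_norm (trunc \<tau> g) \<le> B"
  unfolding Linf_norm_def by (rule cSUP_least) (use assms in \<open>auto simp: trunc_def\<close>)

locale lmi_trajectory = lmi_certificate L P R nv \<delta> \<epsilon> \<mu>0 s \<mu> \<kappa>
  for L P :: "real^'n^'n" and R nv \<delta> \<epsilon> \<mu>0 s \<mu> \<kappa> +
  fixes a0 :: "real^'n" and f a :: "real \<Rightarrow> real^'n" and \<tau> :: real
  assumes a0_small: "norm a0 \<le> \<delta> * sqrt (lambda_min P / lambda_max P)"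
    and tau_nonneg: "\<tau> \<ge> 0"
    and f_pc: "piecewise_continuous f"
    and f_small: "\<forall>t\<in>{0..\<tau>}. norm (f t)
        \<le> lambda_min P * \<epsilon> * \<delta> / (lambda_max P * spec_norm (2 *\<^sub>R P))"
    and sol: "is_solution L R f a0 \<tau> a"
begin

definition V :: "real \<Rightarrow> real" where
  "V t = a t \<bullet> (P *v a t)"

definition V' :: "real \<Rightarrow> real" where
  "V' t = 2 * (a t \<bullet> (P *v (L *v a t + Upsilon R (a t) + f t)))"

lemma initial_state: "a 0 = a0" and continuous_on_a: "continuous_on {0..\<tau>} a"
  and a_has_integral: "\<And>t. t \<in> {0..\<tau>} \<Longrightarrow>
     ((\<lambda>s. L *v a s + Upsilon R (a s) + f s) has_integral (a t - a0)) {0..t}"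
  using sol by (auto simp: is_solution_def)

lemma continuous_on_drift: "continuous_on {0..\<tau>} (\<lambda>s. L *v a s + Upsilon R (a s))"
proof (rule continuous_on_add)
  show "continuous_on {0..\<tau>} (\<lambda>s. L *v a s)"
    by (rule continuous_on_compose2[OF linear_continuous_on[OF matrix_vector_mul_bounded_linear]
          continuous_on_a]) auto
  show "continuous_on {0..\<tau>} (\<lambda>s. Upsilon R (a s))"
    by (rule continuous_on_compose2[OF continuous_on_Upsilon continuous_on_a]) auto
qed

lemma V_has_derivative:
  "\<exists>D. finite D \<and> (\<forall>t\<in>{0<..<\<tau>} - D. (V has_real_derivative V' t) (at t))"
proof -
  obtain D where D: "finite D" "\<forall>t\<in>{0..\<tau>} - D. continuous (at t within {0..}) f"
    using f_pc tau_nonneg unfolding piecewise_continuous_def by blast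
  have "(V has_real_derivative V' t) (at t)" if t: "t \<in> {0<..<\<tau>} - D" for t
  proof -
    have "continuous (at t within {0..\<tau>}) (\<lambda>s. L *v a s + Upsilon R (a s))"
      using continuous_on_drift t by (simp add: continuous_on_eq_continuous_within)
    moreover have "continuous (at t within {0..\<tau>}) f"
      using D(2) t by (auto intro: continuous_within_subset[of t "{0..}"])
    ultimately have "continuous (at t within {0..\<tau>}) (\<lambda>s. L *v a s + Upsilon R (a s) + f s)"
      by (rule continuous_add)
    then have "(a has_vector_derivative (L *v a t + Upsilon R (a t) + f t)) (at t)"
      using integral_solution_has_vector_derivative[OF a_has_integral D(1) t] by blast
    then show ?thesis
      unfolding V_def[abs_def] V'_def by (rule quadratic_form_has_real_derivative[OF Psym])
  qed
  with D(1) show ?thesis by blast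
qed

lemma continuous_on_V: "continuous_on {0..\<tau>} V"
  unfolding V_def[abs_def] by (rule continuous_on_compose2[OF continuous_on_quadratic_form continuous_on_a]) auto

lemma V_bounds: "lmin * (norm (a t))\<^sup>2 \<le> V t" "V t \<le> lmax * (norm (a t))\<^sup>2" "0 \<le> V t"
proof -
  show lo: "lmin * (norm (a t))\<^sup>2 \<le> V t"
    unfolding V_def power2_norm_eq_inner by (rule lambda_min_symmetric(2)[OF Psym])
  show "V t \<le> lmax * (norm (a t))\<^sup>2"
    unfolding V_def power2_norm_eq_inner by (rule quadratic_form_le_lambda_max[OF Psym])
  have "0 \<le> lmin * (norm (a t))\<^sup>2" using lambda_min_max_bounds(2) by simp
  with lo show "0 \<le> V t" by linarith
qed

lemma norm_a_le_sqrt_V: "norm (a t) \<le> sqrt (V t) / sqrt lmin"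
proof -
  have "(norm (a t))\<^sup>2 \<le> V t / lmin" using V_bounds(1)[of t] lambda_min_max_bounds(2) by (simp add: field_simps)
  then have "norm (a t) \<le> sqrt (V t / lmin)" by (rule real_le_rsqrt)
  then show ?thesis by (simp add: real_sqrt_divide)
qed

lemma sqrt_V_0_le: "sqrt (V 0) / sqrt lmin \<le> norm a0 * sqrt (lmax / lmin)"
proof -
  have "sqrt (V 0) \<le> sqrt lmax * norm a0"
    using V_bounds(2)[of 0] initial_state by (metis real_sqrt_le_mono real_sqrt_mult real_sqrt_abs abs_norm_cancel)
  then have "sqrt (V 0) / sqrt lmin \<le> sqrt lmax * norm a0 / sqrt lmin"
    by (rule divide_right_mono) (use lambda_min_max_bounds(2) in simp)
  then show ?thesis by (simp add: real_sqrt_divide mult_ac)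
qed

lemma V'_le: "V' t \<le> - \<epsilon> * (norm (a t))\<^sup>2 + ((norm (a t))\<^sup>2 - \<delta>\<^sup>2) * ball_weight (a t) + \<sigma> * norm (a t) * norm (f t)"
  unfolding V'_def power2_norm_eq_inner by (rule dissipation_inequality)

lemma input_gain_le:
  assumes "t \<in> {0..\<tau>}" shows "\<sigma> * norm (f t) \<le> lmin * \<epsilon> * \<delta> / lmax"
proof (cases "\<sigma> = 0")
  case False
  then have "0 < \<sigma>" using spec_norm_nonneg[of "2 *\<^sub>R P"] by linarith
  then have "\<sigma> * norm (f t) \<le> \<sigma> * (lmin * \<epsilon> * \<delta> / (lmax * \<sigma>))"
    using f_small assms by (intro mult_left_mono) auto
  then show ?thesis using \<open>0 < \<sigma>\<close> by simp
qed (use lambda_min_max_bounds eps_pos delta_pos in simp)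

text \<open>Outside the ellipsoid \<open>V \<le> lmin \<delta>\<^sup>2\<close> the input is dominated by the decay term, so only the
  S-procedure term can make \<open>V\<close> grow, at a rate proportional to the excess.\<close>

lemma V'_le_above_level:
  assumes t: "t \<in> {0..\<tau>}" and above: "lmin * \<delta>\<^sup>2 < V t"
    and K: "ball_weight (a t) \<le> K" "0 \<le> K"
  shows "V' t \<le> K / lmin * (V t - lmin * \<delta>\<^sup>2)"
proof -
  define n where "n = norm (a t)"
  have n: "0 \<le> n" by (simp add: n_def)
  note lb = lambda_min_max_bounds
  have "lmin * \<delta> / lmax \<le> n"
  proof (rule power2_le_imp_le[OF _ n])
    have "(lmin * \<delta> / lmax)\<^sup>2 = (lmin / lmax) * (lmin * \<delta>\<^sup>2 / lmax)" by (simp add: power2_eq_square)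
    also have "\<dots> \<le> lmin * \<delta>\<^sup>2 / lmax" using lb by (intro mult_left_le_one_le) auto
    also have "\<dots> < n\<^sup>2" using above V_bounds(2)[of t] lb by (simp add: n_def field_simps)
    finally show "(lmin * \<delta> / lmax)\<^sup>2 \<le> n\<^sup>2" by simp
  qed
  then have "\<sigma> * n * norm (f t) \<le> \<epsilon> * n\<^sup>2"
  proof -
    assume n_ge: "lmin * \<delta> / lmax \<le> n"
    have "\<sigma> * n * norm (f t) = n * (\<sigma> * norm (f t))" by simp
    also have "\<dots> \<le> n * (lmin * \<epsilon> * \<delta> / lmax)" by (rule mult_left_mono[OF input_gain_le[OF t] n])
    also have "\<dots> = \<epsilon> * n * (lmin * \<delta> / lmax)" by simp
    also have "\<dots> \<le> \<epsilon> * n * n" using n_ge eps_pos n by (intro mult_left_mono) auto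
    finally show ?thesis by (simp add: power2_eq_square)
  qed
  moreover have "(n\<^sup>2 - \<delta>\<^sup>2) * ball_weight (a t) \<le> K / lmin * (V t - lmin * \<delta>\<^sup>2)"
  proof (cases "n\<^sup>2 \<le> \<delta>\<^sup>2")
    case True
    then have "(n\<^sup>2 - \<delta>\<^sup>2) * ball_weight (a t) \<le> 0"
      using ball_weight_nonneg[of "a t"] by (simp add: mult_nonpos_nonneg)
    moreover have "0 \<le> K / lmin * (V t - lmin * \<delta>\<^sup>2)" using K above lb by simp
    ultimately show ?thesis by linarith
  next
    case False
    have "(n\<^sup>2 - \<delta>\<^sup>2) * ball_weight (a t) \<le> (n\<^sup>2 - \<delta>\<^sup>2) * K" using False K by simp
    also have "\<dots> \<le> (V t - lmin * \<delta>\<^sup>2) / lmin * K"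
      using V_bounds(1)[of t] lb K by (intro mult_right_mono) (auto simp: n_def field_simps)
    also have "\<dots> = K / lmin * (V t - lmin * \<delta>\<^sup>2)" by simp
    finally show ?thesis .
  qed
  ultimately show ?thesis using V'_le[of t] unfolding n_def by linarith
qed

lemma V_le_level: "t \<in> {0..\<tau>} \<Longrightarrow> V t \<le> lmin * \<delta>\<^sup>2"
proof -
  obtain D where D: "finite D" "\<And>t. t \<in> {0<..<\<tau>} - D \<Longrightarrow> (V has_real_derivative V' t) (at t)"
    using V_has_derivative by blast
  have "continuous_on {0..\<tau>} (\<lambda>t. ball_weight (a t))"
    by (rule continuous_on_compose2[OF continuous_on_ball_weight continuous_on_a]) auto
  then have "\<exists>t1\<in>{0..\<tau>}. \<forall>t\<in>{0..\<tau>}. ball_weight (a t) \<le> ball_weight (a t1)"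
    using tau_nonneg by (intro continuous_attains_sup) auto
  then obtain t1 where "\<And>t. t \<in> {0..\<tau>} \<Longrightarrow> ball_weight (a t) \<le> ball_weight (a t1)"
    by blast
  define K where "K = ball_weight (a t1)"
  have K: "\<And>t. t \<in> {0..\<tau>} \<Longrightarrow> ball_weight (a t) \<le> K" "0 \<le> K"
    using \<open>\<And>t. t \<in> {0..\<tau>} \<Longrightarrow> ball_weight (a t) \<le> ball_weight (a t1)\<close> ball_weight_nonneg
    by (auto simp: K_def)
  have "V 0 \<le> lmax * (norm a0)\<^sup>2" using V_bounds(2)[of 0] initial_state by simp
  also have "\<dots> \<le> lmax * (\<delta> * sqrt (lmin / lmax))\<^sup>2"
    using a0_small lambda_min_max_bounds by (intro mult_left_mono power_mono) auto
  also have "\<dots> = lmin * \<delta>\<^sup>2" using lambda_min_max_bounds by (simp add: power_mult_distrib)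
  finally have "V 0 \<le> lmin * \<delta>\<^sup>2" .
  show "V t \<le> lmin * \<delta>\<^sup>2" if t: "t \<in> {0..\<tau>}" for t
  proof (rule sublevel_set_invariant[OF D(1) continuous_on_V D(2) _ \<open>V 0 \<le> lmin * \<delta>\<^sup>2\<close> t])
    fix s assume "s \<in> {0<..<\<tau>} - D" "lmin * \<delta>\<^sup>2 < V s"
    then show "V' s \<le> K / lmin * (V s - lmin * \<delta>\<^sup>2)"
      by (intro V'_le_above_level K) auto
  qed
qed

lemma state_bound:
  assumes "t \<in> {0..\<tau>}" shows "norm (a t) \<le> \<delta>"
proof (rule power2_le_imp_le)
  have "lmin * (norm (a t))\<^sup>2 \<le> lmin * \<delta>\<^sup>2" using V_le_level[OF assms] V_bounds(1)[of t] by linarith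
  then show "(norm (a t))\<^sup>2 \<le> \<delta>\<^sup>2" using lambda_min_max_bounds(2) by simp
qed (use delta_pos in simp)

lemma V'_le_comparison:
  assumes t: "t \<in> {0..\<tau>}"
  shows "V' t \<le> -2 * decay * V t + 2 * gain * sqrt (V t) * norm (f t)"
proof -
  define n where "n = norm (a t)"
  have n: "0 \<le> n" "n \<le> \<delta>" using state_bound[OF t] by (auto simp: n_def)
  then have "(n\<^sup>2 - \<delta>\<^sup>2) * ball_weight (a t) \<le> 0"
    using ball_weight_nonneg[of "a t"] by (intro mult_nonpos_nonneg) (auto simp: power_mono)
  moreover have "- \<epsilon> * n\<^sup>2 \<le> -2 * decay * V t"
  proof -
    have "(\<epsilon> / lmax) * V t \<le> (\<epsilon> / lmax) * (lmax * n\<^sup>2)"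
      using V_bounds(2)[of t] eps_pos lambda_min_max_bounds by (intro mult_left_mono) (auto simp: n_def)
    then show ?thesis using lambda_min_max_bounds by simp
  qed
  moreover have "\<sigma> * n * norm (f t) \<le> \<sigma> * (sqrt (V t) / sqrt lmin) * norm (f t)"
    unfolding n_def
    by (rule mult_right_mono[OF mult_left_mono[OF norm_a_le_sqrt_V spec_norm_nonneg] norm_ge_zero])
  moreover have "\<sigma> * (sqrt (V t) / sqrt lmin) * norm (f t) = 2 * gain * sqrt (V t) * norm (f t)"
    by simp
  ultimately show ?thesis using V'_le[of t] unfolding n_def by linarith
qed

lemma comparison_constants:
  "0 < decay" "0 \<le> gain"
  "gain / decay / sqrt lmin = lmax * \<sigma> / (lmin * \<epsilon>)"
  "0 \<le> lmax * \<sigma> / (lmin * \<epsilon>)"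
  using lambda_min_max_bounds eps_pos spec_norm_nonneg[of "2 *\<^sub>R P"]
  by (auto simp: field_simps)

lemma f_bounded: "t \<in> {0..\<tau>} \<Longrightarrow> norm (f t) \<le> lmin * \<epsilon> * \<delta> / (lmax * \<sigma>)"
  using f_small by blast

lemma sqrt_comparison_V:
  "\<exists>D. sqrt_comparison \<tau> D V V' (\<lambda>t. norm (f t)) decay gain"
proof -
  obtain D where D: "finite D" "\<And>t. t \<in> {0<..<\<tau>} - D \<Longrightarrow> (V has_real_derivative V' t) (at t)"
    using V_has_derivative by blast
  have "sqrt_comparison \<tau> D V V' (\<lambda>t. norm (f t)) decay gain"
    using tau_nonneg D continuous_on_V V_bounds(3) V'_le_comparison comparison_constants(1,2)
    by unfold_locales auto
  then show ?thesis ..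
qed

lemma Linf_bound:
  "Linf_norm (trunc \<tau> a) \<le> (lmax * \<sigma> / (lmin * \<epsilon>)) * Linf_norm (trunc \<tau> f) + norm a0 * sqrt (lmax / lmin) * 1"
proof -
  obtain D where "sqrt_comparison \<tau> D V V' (\<lambda>t. norm (f t)) decay gain"
    using sqrt_comparison_V by blast
  then interpret cmp: sqrt_comparison \<tau> D V V' "\<lambda>t. norm (f t)" decay gain .
  define \<Phi> where "\<Phi> = Linf_norm (trunc \<tau> f)"
  have f_le: "norm (f t) \<le> \<Phi>" if "t \<in> {0..\<tau>}" for t
    unfolding \<Phi>_def using norm_le_Linf_norm_trunc[OF f_bounded that] by simp
  then have "0 \<le> \<Phi>" using tau_nonneg order_trans[OF norm_ge_zero, of "f 0" \<Phi>] by auto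
  have "norm (a t) \<le> (lmax * \<sigma> / (lmin * \<epsilon>)) * \<Phi> + norm a0 * sqrt (lmax / lmin)"
    if t: "t \<in> {0..\<tau>}" for t
  proof -
    define G where "G = gain / decay"
    have "sqrt (V t) \<le> sqrt (V 0) + G * \<Phi>"
      unfolding G_def by (rule cmp.sqrt_le_sup_bound[OF f_le t])
    then have "sqrt (V t) / sqrt lmin \<le> (sqrt (V 0) + G * \<Phi>) / sqrt lmin"
      using lambda_min_max_bounds by (intro divide_right_mono) auto
    also have "\<dots> = sqrt (V 0) / sqrt lmin + G / sqrt lmin * \<Phi>" by (simp add: add_divide_distrib)
    also have "G / sqrt lmin = lmax * \<sigma> / (lmin * \<epsilon>)" unfolding G_def by (rule comparison_constants(3))
    finally show ?thesis using norm_a_le_sqrt_V[of t] sqrt_V_0_le by linarith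
  qed
  moreover have "0 \<le> (lmax * \<sigma> / (lmin * \<epsilon>)) * \<Phi> + norm a0 * sqrt (lmax / lmin)"
    using \<open>0 \<le> \<Phi>\<close> comparison_constants(4) lambda_min_max_bounds by (intro add_nonneg_nonneg mult_nonneg_nonneg) auto
  ultimately show ?thesis unfolding \<Phi>_def[symmetric] by (intro Linf_norm_trunc_le) auto
qed

lemma f_integrable: "f integrable_on {0..\<tau>}"
proof -
  have "(\<lambda>s. L *v a s + Upsilon R (a s) + f s) integrable_on {0..\<tau>}"
    using a_has_integral[of \<tau>] tau_nonneg by auto
  moreover have "(\<lambda>s. L *v a s + Upsilon R (a s)) integrable_on {0..\<tau>}"
    by (rule integrable_continuous_interval[OF continuous_on_drift])
  ultimately have "(\<lambda>s. (L *v a s + Upsilon R (a s) + f s) - (L *v a s + Upsilon R (a s))) integrable_on {0..\<tau>}"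
    by (rule integrable_diff)
  then show ?thesis by simp
qed

lemma Lp_norm_a_le:
  assumes p: "p > 0"
  shows "Lp_norm p (trunc \<tau> a) \<le> (integral {0..\<tau>} (\<lambda>t. V t powr (p/2))) powr (1/p) / sqrt lmin"
proof -
  have ai: "(\<lambda>t. norm (a t) powr p) integrable_on {0..\<tau>}"
    by (rule integrable_continuous_interval[OF continuous_on_powr'[OF continuous_on_norm[OF continuous_on_a]
          continuous_on_const]]) (use p in auto)
  have Vi: "(\<lambda>t. V t powr (p/2)) integrable_on {0..\<tau>}"
    by (rule integrable_continuous_interval[OF continuous_on_powr'[OF continuous_on_V continuous_on_const]])
      (use V_bounds(3) p in auto)
  have "norm (a t) powr p \<le> lmin powr (- p/2) * V t powr (p/2)" for t
  proof -
    have "norm (a t) powr p \<le> (sqrt (V t) / sqrt lmin) powr p"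
      using norm_a_le_sqrt_V[of t] p by (intro powr_mono2) auto
    also have "\<dots> = lmin powr (- p/2) * V t powr (p/2)"
      using V_bounds(3)[of t] lambda_min_max_bounds(2)
      by (simp add: powr_divide powr_half_sqrt[symmetric] powr_powr powr_minus_divide)
    finally show ?thesis .
  qed
  then have "integral {0..\<tau>} (\<lambda>t. norm (a t) powr p) \<le> lmin powr (- p/2) * integral {0..\<tau>} (\<lambda>t. V t powr (p/2))"
    by (intro has_integral_le[OF integrable_integral[OF ai] has_integral_mult_right[OF integrable_integral[OF Vi]]])
  then have "(integral {0..\<tau>} (\<lambda>t. norm (a t) powr p)) powr (1/p)
      \<le> (lmin powr (- p/2) * integral {0..\<tau>} (\<lambda>t. V t powr (p/2))) powr (1/p)"
    using p integral_nonneg[OF ai] by (intro powr_mono2) auto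
  also have "\<dots> = (integral {0..\<tau>} (\<lambda>t. V t powr (p/2))) powr (1/p) / sqrt lmin"
    using p lambda_min_max_bounds(2) integral_nonneg[OF Vi] V_bounds(3)
    by (simp add: powr_divide powr_powr powr_minus_divide powr_half_sqrt)
  finally show ?thesis by (simp only: Lp_norm_trunc[OF ai])
qed

lemma Lp_bound:
  assumes p: "p \<ge> 1"
  shows "Lp_norm p (trunc \<tau> a) \<le> (lmax * \<sigma> / (lmin * \<epsilon>)) * Lp_norm p (trunc \<tau> f)
    + norm a0 * sqrt (lmax / lmin) * (2 * lmax / (\<epsilon> * p)) powr (1 / p)"
proof -
  obtain D where "sqrt_comparison \<tau> D V V' (\<lambda>t. norm (f t)) decay gain"
    using sqrt_comparison_V by blast
  then interpret cmp: sqrt_comparison \<tau> D V V' "\<lambda>t. norm (f t)" decay gain .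
  define G where "G = gain / decay"
  have fi: "(\<lambda>t. norm (f t) powr p) integrable_on {0..\<tau>}"
    using p by (intro integrable_powr_norm_if_bounded[OF f_integrable f_bounded]) auto
  have "Lp_norm p (trunc \<tau> a) \<le> (integral {0..\<tau>} (\<lambda>t. V t powr (p/2))) powr (1/p) / sqrt lmin"
    using p by (intro Lp_norm_a_le) auto
  also have "\<dots> \<le> (G * Lp_norm p (trunc \<tau> f) + (1 / (decay * p)) powr (1/p) * sqrt (V 0)) / sqrt lmin"
    unfolding G_def Lp_norm_trunc[OF fi]
    by (rule divide_right_mono[OF cmp.sqrt_Lp_bound[OF V_le_level fi p] real_sqrt_ge_zero[OF less_imp_le[OF lambda_min_max_bounds(2)]]])
  also have "\<dots> = G / sqrt lmin * Lp_norm p (trunc \<tau> f)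
      + (2 * lmax / (\<epsilon> * p)) powr (1/p) * (sqrt (V 0) / sqrt lmin)"
    by (simp add: add_divide_distrib)
  also have "\<dots> \<le> (lmax * \<sigma> / (lmin * \<epsilon>)) * Lp_norm p (trunc \<tau> f)
      + (2 * lmax / (\<epsilon> * p)) powr (1/p) * (norm a0 * sqrt (lmax / lmin))"
    unfolding G_def comparison_constants(3) using sqrt_V_0_le by (intro add_left_mono mult_left_mono) auto
  finally show ?thesis by (simp add: mult_ac)
qed

end

theorem theorem2:
  fixes L P :: "real^'n^'n" and R :: "'n \<Rightarrow> real^'n^'n" and nv :: "real^'n"
    and \<delta> \<epsilon> \<mu>0 :: real and s \<mu> \<kappa> :: "'n \<Rightarrow> real"
    and a0 :: "real^'n" and f a :: "real \<Rightarrow> real^'n" and \<tau> :: real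
  assumes hurw: "hurwitz L"
    and Rsym: "\<And>m. symmetric_mat (R m)"
    and energy: "\<And>x. x \<bullet> Upsilon R x = 0"
    and nvec: "\<And>x. nv \<bullet> Upsilon R x = 0"
    and delta_pos: "\<delta> > 0"
    and Psym: "symmetric_mat P"
    and eps_pos: "\<epsilon> > 0"
    and s_nonneg: "\<And>m. s m \<ge> 0"
    and P_lmi: "psd (P - \<epsilon> *\<^sub>R mat 1)"
    and G_lmi: "nsd (block
        (transpose L ** P + P ** L + \<epsilon> *\<^sub>R mat 1 + (\<Sum>m\<in>UNIV. (s m * \<delta>\<^sup>2) *\<^sub>R (R m ** R m)))
        (P + \<mu>0 *\<^sub>R mat 1 + (\<Sum>i\<in>UNIV. \<mu> i *\<^sub>R outer (axis i 1) nv))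
        (P + \<mu>0 *\<^sub>R transpose (mat 1) + (\<Sum>i\<in>UNIV. \<mu> i *\<^sub>R transpose (outer (axis i 1) nv)))
        (- (\<Sum>m\<in>UNIV. s m *\<^sub>R outer (axis m 1) (axis m 1))
           + (\<Sum>j\<in>UNIV. \<kappa> j *\<^sub>R (outer (axis j 1) nv + outer nv (axis j 1)))))"
    and a0_small: "norm a0 \<le> \<delta> * sqrt (lambda_min P / lambda_max P)"
    and tau_nonneg: "\<tau> \<ge> 0"
    and f_pc: "piecewise_continuous f"
    and f_small: "\<forall>t\<in>{0..\<tau>}. norm (f t)
        \<le> lambda_min P * \<epsilon> * \<delta> / (lambda_max P * spec_norm (2 *\<^sub>R P))"
    and sol: "is_solution L R f a0 \<tau> a"
  shows "(\<forall>t\<in>{0..\<tau>}. norm (a t) \<le> \<delta>)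
    \<and> (\<forall>p::real. p \<ge> 1 \<longrightarrow>
         Lp_norm p (trunc \<tau> a)
           \<le> (lambda_max P * spec_norm (2 *\<^sub>R P) / (lambda_min P * \<epsilon>)) * Lp_norm p (trunc \<tau> f)
             + norm a0 * sqrt (lambda_max P / lambda_min P) * (2 * lambda_max P / (\<epsilon> * p)) powr (1 / p))
    \<and> Linf_norm (trunc \<tau> a)
           \<le> (lambda_max P * spec_norm (2 *\<^sub>R P) / (lambda_min P * \<epsilon>)) * Linf_norm (trunc \<tau> f)
             + norm a0 * sqrt (lambda_max P / lambda_min P) * 1"
proof -
  interpret lmi_trajectory L P R nv \<delta> \<epsilon> \<mu>0 s \<mu> \<kappa> a0 f a \<tau>
    by unfold_locales (fact assms)+
  show ?thesis using state_bound Lp_bound Linf_bound by blast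
qed

end
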